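(* Let $Z>0$. Let $\nu\mapsto\kappa_\nu$, $\nu\mapsto a^i_\nu$, $\nu\mapsto a^r_\nu$ be measurable on $(0,\infty)$ with $0<\kappa_\nu\le\kappa_M$ for some constant $\kappa_M$, $a^i_\nu,a^r_\nu\ge0$ and $a_\nu:=a^i_\nu+a^r_\nu<1$ for all $\nu>0$. Let $Q^\pm_\nu(\mu)$ be measurable on $(0,1)\times(0,\infty)$ and suppose there are constants $T_M>0$, $Q>0$ with $$0\le Q^\pm_\nu(\mu)\le Q\,B_\nu(T_M)\quad\text{for all }(\mu,\nu)\in(0,1)\times(0,\infty).$$ Define $I^0_\nu=0$, $T^0=0$, and for $n\ge0$ let $I^{n+1}_\nu(\tau,\mu)$ be the mild solution on $(0,Z)\times(-1,1)\times(0,\infty)$ of $$(\mu\partial_\tau+\kappa_\nu)I^{n+1}_\nu=\kappa_\nu(1-a_\nu)B_\nu(T^n(\tau))+\kappa_\nu a^i_\nu J^n_\nu(\tau)+\tfrac38\kappa_\nu a^r_\nu\big((3-\mu^2)J^n_\nu(\tau)+(3\mu^2-1)K^n_\nu(\tau)\big),$$ $$I^{n+1}_\nu(0,\mu)=Q^+_\nu(\mu),\quad I^{n+1}_\nu(Z,-\mu)=Q^-_\nu(\mu),\quad 0<\mu<1,$$ and set $T^{n+1}=T[J^{n+1}]$. Then the sequences are monotone nondecreasing, $I^n_\nu\le I^{n+1}_\nu$ and $T^n\le T^{n+1}$ pointwise, and $I^n_\nu\to I_\nu$, $T^n\to T$ pointwise, where $(I_\nu,T)$ is a mild solution of $$(\mu\partial_\tau+\kappa_\nu)I_\nu=\kappa_\nu(1-a_\nu)B_\nu(T(\tau))+\kappa_\nu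 a^i_\nu J_\nu(\tau)+\tfrac38\kappa_\nu a^r_\nu\big((3-\mu^2)J_\nu(\tau)+(3\mu^2-1)K_\nu(\tau)\big),$$ with the same boundary conditions and with $T=T[J]$, i.e. $\int_0^\infty\kappa_\nu(1-a_\nu)B_\nu(T(\tau))\,d\nu=\int_0^\infty\kappa_\nu(1-a_\nu)J_\nu(\tau)\,d\nu$.
   Context: Planck function: for $T>0$, $B_\nu(T)=\dfrac{2\hbar\nu^3}{c^2\,(e^{\hbar\nu/(kT)}-1)}$ with fixed positive constants $\hbar,c,k$, and $B_\nu(0)=0$; it is continuous and increasing in $T$ for each $\nu>0$. For an intensity $I_\nu(\tau,\mu)$: $J_\nu(\tau)=\tfrac12\int_{-1}^1I_\nu(\tau,\mu)d\mu$, $K_\nu(\tau)=\tfrac12\int_{-1}^1\mu^2I_\nu(\tau,\mu)d\mu$ (and $J^n,K^n$ are those of $I^n$). For nonnegative $J$ with $\int_0^\infty\kappa_\nu(1-a_\nu)J_\nu(\tau)d\nu<\infty$, $T[J](\tau)$ is the unique $T\ge0$ with $\int_0^\infty\kappa_\nu(1-a_\nu)B_\nu(T)d\nu=\int_0^\infty\kappa_\nu(1-a_\nu)J_\nu(\tau)d\nu$. "Mild solution" of $(\mu\partial_\tau+\kappa_\nu)I_\nu=S_\nu(\tau,\mu)$ with these boundary conditions means the characteristics formula holds: for $\mu>0$, $I_\nu(\tau,\mu)=e^{-\kappa_\nu\tau/\mu}Q^+_\nu(\mu)+\int_0^\tau e^{-\kappa_\nu(\tau-t)/\mu}\frac{1}{\mu}S_\nu(t,\mu)dt$;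 for $\mu<0$, $I_\nu(\tau,\mu)=e^{-\kappa_\nu(Z-\tau)/|\mu|}Q^-_\nu(|\mu|)+\int_\tau^Z e^{-\kappa_\nu(t-\tau)/|\mu|}\frac{1}{|\mu|}S_\nu(t,\mu)dt$. *)

theory Defs
  imports "HOL-Analysis.Analysis"
begin

definition planck :: "real \<Rightarrow> real \<Rightarrow> real \<Rightarrow> real \<Rightarrow> real \<Rightarrow> real" where
  "planck hb c kB \<nu> T =
     (if T > 0 then 2 * hb * \<nu> ^ 3 / (c ^ 2 * (exp (hb * \<nu> / (kB * T)) - 1)) else 0)"

definition Jmom :: "(real \<Rightarrow> real \<Rightarrow> real) \<Rightarrow> real \<Rightarrow> real" where
  "Jmom Iv \<tau> = 1/2 * (LINT \<mu>:{-1..1}|lborel. Iv \<tau> \<mu>)"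

definition Kmom :: "(real \<Rightarrow> real \<Rightarrow> real) \<Rightarrow> real \<Rightarrow> real" where
  "Kmom Iv \<tau> = 1/2 * (LINT \<mu>:{-1..1}|lborel. \<mu>^2 * Iv \<tau> \<mu>)"

text \<open>Temperature map T[J]: the unique T \<ge> 0 balancing the frequency-integrated emission.
  J is indexed as J \<nu> \<tau>; a = a^i + a^r.\<close>
definition Tof :: "real \<Rightarrow> real \<Rightarrow> real \<Rightarrow> (real \<Rightarrow> real) \<Rightarrow> (real \<Rightarrow> real)
                   \<Rightarrow> (real \<Rightarrow> real \<Rightarrow> real) \<Rightarrow> real \<Rightarrow> real" where
  "Tof hb c kB \<kappa> a J \<tau> =
     (THE T. T \<ge> 0 \<and>
        (\<integral>\<^sup>+ \<nu>. ennreal (\<kappa> \<nu> * (1 - a \<nu>) * planck hb c kB \<nu> T) * indicator {0<..} \<nu> \<partial>lborel)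
      = (\<integral>\<^sup>+ \<nu>. ennreal (\<kappa> \<nu> * (1 - a \<nu>) * J \<nu> \<tau>) * indicator {0<..} \<nu> \<partial>lborel))"

text \<open>Characteristics (mild solution) formula for source S \<nu> t \<mu> and boundary data
  Qp \<nu> \<mu>, Qm \<nu> \<mu> (\<mu> \<in> (0,1)). Value 0 at the irrelevant direction \<mu> = 0.\<close>
definition charsol :: "(real \<Rightarrow> real) \<Rightarrow> (real \<Rightarrow> real \<Rightarrow> real) \<Rightarrow> (real \<Rightarrow> real \<Rightarrow> real) \<Rightarrow> real
                       \<Rightarrow> (real \<Rightarrow> real \<Rightarrow> real \<Rightarrow> real) \<Rightarrow> real \<Rightarrow> real \<Rightarrow> real \<Rightarrow> real" where
  "charsol \<kappa> Qp Qm Z S \<nu> \<tau> \<mu> =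
     (if \<mu> > 0 then
        exp (- \<kappa> \<nu> * \<tau> / \<mu>) * Qp \<nu> \<mu>
        + (LINT t:{0..\<tau>}|lborel. exp (- \<kappa> \<nu> * (\<tau> - t) / \<mu>) * (1 / \<mu>) * S \<nu> t \<mu>)
      else if \<mu> < 0 then
        exp (- \<kappa> \<nu> * (Z - \<tau>) / \<bar>\<mu>\<bar>) * Qm \<nu> \<bar>\<mu>\<bar>
        + (LINT t:{\<tau>..Z}|lborel. exp (- \<kappa> \<nu> * (t - \<tau>) / \<bar>\<mu>\<bar>) * (1 / \<bar>\<mu>\<bar>) * S \<nu> t \<mu>)
      else 0)"

definition mild_solution :: "(real \<Rightarrow> real) \<Rightarrow> (real \<Rightarrow> real \<Rightarrow> real) \<Rightarrow> (real \<Rightarrow> real \<Rightarrow> real) \<Rightarrow> real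
                       \<Rightarrow> (real \<Rightarrow> real \<Rightarrow> real \<Rightarrow> real) \<Rightarrow> (real \<Rightarrow> real \<Rightarrow> real \<Rightarrow> real) \<Rightarrow> bool" where
  "mild_solution \<kappa> Qp Qm Z S I \<longleftrightarrow>
     (\<forall>\<nu> \<tau> \<mu>. \<nu> > 0 \<and> \<tau> \<in> {0..Z} \<and> \<mu> \<in> {-1<..<1} \<and> \<mu> \<noteq> 0 \<longrightarrow>
        I \<nu> \<tau> \<mu> = charsol \<kappa> Qp Qm Z S \<nu> \<tau> \<mu>)"

definition src :: "real \<Rightarrow> real \<Rightarrow> real \<Rightarrow> (real \<Rightarrow> real) \<Rightarrow> (real \<Rightarrow> real) \<Rightarrow> (real \<Rightarrow> real)
                   \<Rightarrow> (real \<Rightarrow> real \<Rightarrow> real \<Rightarrow> real) \<Rightarrow> (real \<Rightarrow> real) \<Rightarrow> real \<Rightarrow> real \<Rightarrow> real \<Rightarrow> real" where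
  "src hb c kB \<kappa> ai ar I T \<nu> \<tau> \<mu> =
     \<kappa> \<nu> * (1 - (ai \<nu> + ar \<nu>)) * planck hb c kB \<nu> (T \<tau>)
     + \<kappa> \<nu> * ai \<nu> * Jmom (I \<nu>) \<tau>
     + 3/8 * \<kappa> \<nu> * ar \<nu> * ((3 - \<mu>^2) * Jmom (I \<nu>) \<tau> + (3 * \<mu>^2 - 1) * Kmom (I \<nu>) \<tau>)"

primrec rte_iter :: "real \<Rightarrow> real \<Rightarrow> real \<Rightarrow> (real \<Rightarrow> real) \<Rightarrow> (real \<Rightarrow> real) \<Rightarrow> (real \<Rightarrow> real)
      \<Rightarrow> (real \<Rightarrow> real \<Rightarrow> real) \<Rightarrow> (real \<Rightarrow> real \<Rightarrow> real) \<Rightarrow> real \<Rightarrow> nat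
      \<Rightarrow> (real \<Rightarrow> real \<Rightarrow> real \<Rightarrow> real) \<times> (real \<Rightarrow> real)" where
  "rte_iter hb c kB \<kappa> ai ar Qp Qm Z 0 = ((\<lambda>\<nu> \<tau> \<mu>. 0), (\<lambda>\<tau>. 0))"
| "rte_iter hb c kB \<kappa> ai ar Qp Qm Z (Suc n) =
     (let I = fst (rte_iter hb c kB \<kappa> ai ar Qp Qm Z n);
          T = snd (rte_iter hb c kB \<kappa> ai ar Qp Qm Z n);
          I' = charsol \<kappa> Qp Qm Z (src hb c kB \<kappa> ai ar I T)
      in (I', Tof hb c kB \<kappa> (\<lambda>\<nu>. ai \<nu> + ar \<nu>) (\<lambda>\<nu> \<tau>. Jmom (I' \<nu>) \<tau>)))"

end

theory Submission
  imports Defs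
begin

text \<open>
  The iteration map is monotone: the Rayleigh kernel \<open>(3 - \<mu>\<^sup>2) + (3\<mu>\<^sup>2 - 1) x\<^sup>2\<close> is nonnegative
  for \<open>\<bar>\<mu>\<bar>, \<bar>x\<bar> \<le> 1\<close>, so the source is nondecreasing in the intensity; the Planck function is
  increasing in the temperature; the characteristics formula has nonnegative kernels; and \<open>T[J]\<close>
  is nondecreasing in \<open>J\<close> because the frequency-integrated emission is strictly increasing in \<open>T\<close>.
  Starting from zero the iterates therefore increase. They stay below the blackbody intensity
  \<open>B\<^sub>\<nu>(T\<^sub>*)\<close> at \<open>T\<^sub>* = max 1 Q \<cdot> T\<^sub>M\<close>, which is a supersolution: the boundary data lie below
  it, since \<open>Q B\<^sub>\<nu>(T\<^sub>M) \<le> B\<^sub>\<nu>(T\<^sub>*)\<close> by convexity of \<open>exp\<close>, and a source below \<open>\<kappa>\<^sub>\<nu> B\<^sub>\<nu>(T\<^sub>*)\<close>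
  integrated along a characteristic adds at most \<open>(1 - e) B\<^sub>\<nu>(T\<^sub>*)\<close> to the attenuated boundary
  value \<open>e Q\<^sup>\<plusminus>\<close>. Bounded monotone sequences converge, and dominated convergence carries the limit
  through the angular, optical-depth and frequency integrals.
\<close>

section \<open>Elementary bounds and the Planck function\<close>

lemma exp_minus_one_scale_le:
  fixes s y :: real assumes "s \<ge> 1" "y \<ge> 0"
  shows "s * (exp y - 1) \<le> exp (s * y) - 1"
proof (cases "s = 1 \<or> y = 0")
  case True then show ?thesis by auto
next
  case False
  then have s1: "s > 1" and y0: "y > 0" using assms by auto
  have "(exp 0 - exp y) / (0 - y) \<le> (exp 0 - exp (s*y)) / (0 - s*y)"
    by (rule convex_on_slope_le(1)[OF exp_convex]) (use s1 y0 in auto)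
  then have "(1 - exp (s*y)) / (s*y) \<le> (1 - exp y) / y" by simp
  moreover have "s*y > 0" using s1 y0 by simp
  ultimately have "1 - exp (s*y) \<le> (1 - exp y) / y * (s*y)" by (simp only: divide_le_eq)
  also have "(1 - exp y) / y * (s*y) = s * (1 - exp y)" using y0 by simp
  finally show ?thesis by (simp add: algebra_simps)
qed

lemma one_plus_power_le_power:
  fixes y :: real assumes "y \<ge> 0" shows "1 + y ^ Suc n \<le> (1 + y) ^ Suc n"
proof (induction n)
  case (Suc n)
  have "1 + y ^ Suc (Suc n) \<le> (1 + y) * (1 + y ^ Suc n)" using assms by (simp add: algebra_simps)
  also have "\<dots> \<le> (1 + y) * (1 + y) ^ Suc n" using Suc assms by (intro mult_left_mono) auto
  finally show ?case by simp
qed simp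

lemma power5_le_exp_minus_one:
  fixes x :: real assumes "x \<ge> 0" shows "(x/5) ^ 5 \<le> exp x - 1"
proof -
  have e: "exp x = exp (x/5) ^ 5" using exp_of_nat_mult[of 5 "x/5"] by simp
  have "(1 + x/5) ^ 5 \<le> exp (x/5) ^ 5"
    by (rule power_mono) (use exp_ge_add_one_self[of "x/5"] assms in auto)
  moreover have "1 + (x/5) ^ 5 \<le> (1 + x/5) ^ 5"
    using one_plus_power_le_power[of "x/5" 4] assms by (simp add: numeral_eq_Suc)
  ultimately show ?thesis using e by linarith
qed

lemma tendsto_div_exp_inverse_at_right_0:
  fixes a C d :: real assumes "a > 0" "d > 0"
  shows "((\<lambda>T. C / (d * (exp (a/T) - 1))) \<longlongrightarrow> 0) (at_right 0)"
proof -
  have "filterlim (\<lambda>T. a * inverse T) at_top (at_right (0::real))"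
    by (rule filterlim_tendsto_pos_mult_at_top[OF tendsto_const assms(1) filterlim_inverse_at_top_right])
  then have "filterlim (\<lambda>T. exp (a/T)) at_top (at_right (0::real))"
    using filterlim_compose[OF exp_at_top] by (simp add: divide_inverse)
  then have "filterlim (\<lambda>T. exp (a/T) - 1) at_top (at_right (0::real))"
    by (rule filterlim_tendsto_add_at_top[where c="-1" and f="\<lambda>_. -1", simplified])
  then have "filterlim (\<lambda>T. d * (exp (a/T) - 1)) at_top (at_right (0::real))"
    by (rule filterlim_tendsto_pos_mult_at_top[OF tendsto_const assms(2)])
  then show ?thesis
    by (rule tendsto_divide_0[OF tendsto_const filterlim_at_top_imp_at_infinity])
qed

lemma borel_measurable_planck[measurable]:
  "(\<lambda>x. planck hb c kB (fst x) (snd x)) \<in> borel_measurable (borel \<Otimes>\<^sub>M borel)"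
  unfolding planck_def by measurable

lemma borel_measurable_planck_compose[measurable (raw)]:
  "u \<in> borel_measurable M \<Longrightarrow> v \<in> borel_measurable M \<Longrightarrow>
   (\<lambda>x. planck hb c kB (u x) (v x)) \<in> borel_measurable M"
  using measurable_compose[OF measurable_Pair borel_measurable_planck] by (simp add: borel_prod)

lemma integrable_inverse_square_atLeast_1:
  "integrable lborel (\<lambda>x::real. indicator {1..} x * (1 / x^2))"
proof -
  have "((\<lambda>x::real. 1 / x ^ 2) has_integral 1 / (real (2 - 1) * 1 ^ (2 - 1))) {1..}"
    by (rule has_integral_inverse_power_to_inf) auto
  then have "(\<lambda>x::real. 1 / x ^ 2) absolutely_integrable_on {1..}"
    by (intro nonnegative_absolutely_integrable_1) auto
  then show ?thesis
    unfolding set_integrable_def by (subst (asm) integrable_completion) (auto simp: mult_ac)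
qed

lemma planck_nonpos[simp]: "T \<le> 0 \<Longrightarrow> planck hb c kB \<nu> T = 0"
  by (simp add: planck_def)

context
  fixes hb c kB :: real
  assumes hb: "hb > 0" and cc: "c > 0" and kB: "kB > 0"
begin

lemma planck_nonneg: "\<nu> \<ge> 0 \<Longrightarrow> 0 \<le> planck hb c kB \<nu> T"
  unfolding planck_def using hb kB by (auto intro!: divide_nonneg_pos mult_nonneg_nonneg)

lemma planck_pos: "\<nu> > 0 \<Longrightarrow> T > 0 \<Longrightarrow> 0 < planck hb c kB \<nu> T"
  unfolding planck_def using hb kB cc by (auto intro!: divide_pos_pos mult_pos_pos)

lemma planck_strict_mono:
  assumes "\<nu> > 0" "T1 < T2" "T2 > 0"
  shows "planck hb c kB \<nu> T1 < planck hb c kB \<nu> T2"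
proof (cases "T1 > 0")
  case False then show ?thesis using planck_pos[of \<nu> T2] assms by simp
next
  case True
  have "hb * \<nu> / (kB * T2) < hb * \<nu> / (kB * T1)"
    using True assms hb kB by (intro divide_strict_left_mono) (auto intro!: mult_pos_pos)
  then have "exp (hb * \<nu> / (kB * T2)) - 1 < exp (hb * \<nu> / (kB * T1)) - 1" by simp
  moreover have "0 < exp (hb * \<nu> / (kB * T2)) - 1" using assms hb kB by simp
  ultimately have "c^2 * (exp (hb * \<nu> / (kB * T2)) - 1) < c^2 * (exp (hb * \<nu> / (kB * T1)) - 1)"
    "0 < c^2 * (exp (hb * \<nu> / (kB * T2)) - 1)" using cc by auto
  then show ?thesis using True assms hb
    by (simp add: planck_def divide_strict_left_mono)
qed

lemma planck_mono: "\<nu> > 0 \<Longrightarrow> T1 \<le> T2 \<Longrightarrow> planck hb c kB \<nu> T1 \<le> planck hb c kB \<nu> T2"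
  using planck_strict_mono[of \<nu> T1 T2]
  by (cases "T1 = T2"; cases "T2 > 0") (auto simp: planck_nonneg)

lemma continuous_on_planck:
  assumes "\<nu> > 0" shows "continuous_on {0..} (planck hb c kB \<nu>)"
proof (clarsimp simp: continuous_on_eq_continuous_within)
  fix T :: real assume T: "0 \<le> T"
  show "continuous (at T within {0..}) (planck hb c kB \<nu>)"
  proof (cases "T = 0")
    case True
    have "((\<lambda>T. 2 * hb * \<nu> ^ 3 / (c ^ 2 * (exp ((hb * \<nu> / kB) / T) - 1))) \<longlongrightarrow> 0) (at_right 0)"
      by (rule tendsto_div_exp_inverse_at_right_0) (use assms hb kB cc in auto)
    then have "(planck hb c kB \<nu> \<longlongrightarrow> 0) (at_right 0)"
      by (rule Lim_transform_eventually)
         (auto simp: planck_def eventually_at_right_field intro!: exI[of _ 1])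
    then show ?thesis using True
      by (simp add: continuous_within at_within_Ici_at_right)
  next
    case False
    then have Tp: "T > 0" using T by simp
    have "isCont (\<lambda>T. 2 * hb * \<nu> ^ 3 / (c ^ 2 * (exp (hb * \<nu> / (kB * T)) - 1))) T"
      using Tp assms hb kB cc by (intro continuous_intros) auto
    then have "((\<lambda>T. 2 * hb * \<nu> ^ 3 / (c ^ 2 * (exp (hb * \<nu> / (kB * T)) - 1))) \<longlongrightarrow> planck hb c kB \<nu> T) (at T)"
      using Tp by (simp add: isCont_def planck_def)
    moreover have "\<forall>\<^sub>F x in at T. x > 0" using order_tendstoD(1)[OF tendsto_ident_at Tp] .
    then have "\<forall>\<^sub>F x in at T. 2 * hb * \<nu> ^ 3 / (c ^ 2 * (exp (hb * \<nu> / (kB * x)) - 1)) = planck hb c kB \<nu> x"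
      by eventually_elim (simp add: planck_def)
    ultimately have "(planck hb c kB \<nu> \<longlongrightarrow> planck hb c kB \<nu> T) (at T)"
      by (rule Lim_transform_eventually)
    then show ?thesis unfolding continuous_within using tendsto_within_subset by blast
  qed
qed

lemma tendsto_planck:
  assumes "\<nu> > 0" "\<And>n. X n \<ge> 0" "X \<longlonglongrightarrow> T0"
  shows "(\<lambda>n. planck hb c kB \<nu> (X n)) \<longlonglongrightarrow> planck hb c kB \<nu> T0"
proof -
  have "T0 \<ge> 0" using assms(2,3) by (intro LIMSEQ_le_const) auto
  then show ?thesis
    by (intro continuous_on_tendsto_compose[OF continuous_on_planck[OF assms(1)] assms(3)])
       (use assms in auto)
qed

lemma planck_le_low_freq:
  assumes "0 < \<nu>" "\<nu> \<le> 1" "T > 0"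
  shows "planck hb c kB \<nu> T \<le> 2 * kB * T / c^2"
proof -
  define b where "b = hb / (kB * T)"
  have b0: "b > 0" "b * \<nu> > 0" using hb kB assms by (simp_all add: b_def)
  have "b * \<nu> \<le> exp (b * \<nu>) - 1" using exp_ge_add_one_self[of "b*\<nu>"] by linarith
  then have "2 * hb * \<nu> ^ 3 / (c ^ 2 * (exp (b * \<nu>) - 1)) \<le> 2 * hb * \<nu> ^ 3 / (c ^ 2 * (b * \<nu>))"
    using b0 cc hb assms by (intro divide_left_mono mult_left_mono mult_pos_pos) auto
  also have "\<dots> = 2 * hb * \<nu>^2 / (c^2 * b)" using assms by (simp add: power3_eq_cube power2_eq_square)
  also have "\<dots> \<le> 2 * hb * 1 / (c^2 * b)"
    using assms hb cc b0 by (intro divide_right_mono mult_left_mono) (auto simp: power_le_one)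
  also have "\<dots> = 2 * kB * T / c^2" using hb by (simp add: b_def)
  finally show ?thesis using assms by (simp add: planck_def b_def)
qed

lemma planck_le_high_freq:
  assumes "\<nu> \<ge> 1" "T > 0"
  shows "planck hb c kB \<nu> T \<le> 2 * hb * 5^5 / (c^2 * (hb/(kB*T))^5) * (1 / \<nu>^2)"
proof -
  define b where "b = hb / (kB * T)"
  have b0: "b > 0" "b * \<nu> > 0" using hb kB assms by (simp_all add: b_def)
  have "(b*\<nu>/5)^5 \<le> exp (b * \<nu>) - 1" using power5_le_exp_minus_one[of "b*\<nu>"] b0 by simp
  then have "2 * hb * \<nu> ^ 3 / (c ^ 2 * (exp (b * \<nu>) - 1)) \<le> 2 * hb * \<nu> ^ 3 / (c ^ 2 * (b*\<nu>/5)^5)"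
    using b0 cc hb assms by (intro divide_left_mono mult_left_mono mult_pos_pos) auto
  also have "\<dots> = 2 * hb * 5^5 / (c^2 * b^5) * (1 / \<nu>^2)"
    using assms b0 cc by (simp add: field_simps power_mult_distrib numeral_eq_Suc)
  finally show ?thesis using assms by (simp add: planck_def b_def)
qed

lemma integrable_planck:
  assumes "T \<ge> 0"
  shows "integrable lborel (\<lambda>\<nu>. planck hb c kB \<nu> T * indicator {0<..} \<nu>)"
proof (cases "T = 0")
  case True then show ?thesis by simp
next
  case False
  then have T: "T > 0" using assms by simp
  define K1 where "K1 = 2 * kB * T / c^2"
  define K2 where "K2 = 2 * hb * 5^5 / (c^2 * (hb/(kB*T))^5)"
  have K: "K1 \<ge> 0" "K2 \<ge> 0" using hb kB cc T by (auto simp: K1_def K2_def)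
  have "integrable lborel (\<lambda>x::real. K1 * indicator {0..1} x + K2 * (indicator {1..} x * (1 / x^2)))"
    by (intro Bochner_Integration.integrable_add integrable_mult_right integrable_inverse_square_atLeast_1)
       (simp add: integrable_indicator_iff)
  then show ?thesis
  proof (rule Bochner_Integration.integrable_bound)
    show "(\<lambda>\<nu>. planck hb c kB \<nu> T * indicator {0<..} \<nu>) \<in> borel_measurable lborel"
      by measurable
    show "AE x in lborel. norm (planck hb c kB x T * indicator {0<..} x)
            \<le> norm (K1 * indicator {0..1} x + K2 * (indicator {1..} x * (1 / x^2)))"
    proof (rule AE_I2)
      fix x :: real
      consider "x \<le> 0" | "0 < x" "x \<le> 1" | "1 < x" by linarith
      then show "norm (planck hb c kB x T * indicator {0<..} x)
            \<le> norm (K1 * indicator {0..1} x + K2 * (indicator {1..} x * (1 / x^2)))"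
      proof cases
        case 2
        then show ?thesis using planck_le_low_freq[OF 2 T] planck_nonneg[of x T] K
          by (auto simp: K1_def indicator_def)
      next
        case 3
        then have "planck hb c kB x T \<le> K2 * (1 / x^2)"
          using planck_le_high_freq[OF _ T, of x] by (simp add: K2_def)
        then show ?thesis using 3 planck_nonneg[of x T] K by (simp add: indicator_def)
      qed simp
    qed
  qed
qed

lemma scaled_planck_le_planck:
  assumes "\<nu> > 0" "TM > 0" "Qc > 0"
  shows "Qc * planck hb c kB \<nu> TM \<le> planck hb c kB \<nu> (max 1 Qc * TM)"
proof -
  define s where "s = max 1 Qc"
  define y where "y = hb * \<nu> / (kB * (s * TM))"
  have s1: "s \<ge> 1" "Qc \<le> s" by (auto simp: s_def)
  have y0: "y > 0" using assms hb kB s1 by (auto simp: y_def)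
  have e1: "hb * \<nu> / (kB * TM) = s * y" using s1 assms kB by (simp add: y_def)
  have d1: "0 < exp y - 1" using y0 by simp
  have "Qc * (exp y - 1) \<le> s * (exp y - 1)" using s1 d1 by (intro mult_right_mono) auto
  also have "\<dots> \<le> exp (s*y) - 1" by (rule exp_minus_one_scale_le) (use s1 y0 in auto)
  finally have ineq: "Qc * (exp y - 1) \<le> exp (s*y) - 1" .
  define A where "A = 2 * hb * \<nu> ^ 3"
  define D1 where "D1 = c^2 * (exp (s*y) - 1)"
  define D2 where "D2 = c^2 * (exp y - 1)"
  have A0: "A \<ge> 0" using hb assms by (simp add: A_def)
  have D2p: "D2 > 0" using d1 cc by (simp add: D2_def)
  have "Qc * D2 \<le> D1" using ineq cc unfolding D1_def D2_def
    by (metis mult.left_commute mult_left_mono zero_le_power2)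
  then have D: "D2 \<le> D1 / Qc" using assms by (simp add: le_divide_eq mult.commute)
  have "Qc * (A / D1) = A / (D1 / Qc)" using assms by simp
  also have "\<dots> \<le> A / D2"
  proof -
    have "D1 / Qc > 0" using D D2p by linarith
    then show ?thesis by (rule divide_left_mono[OF D A0 mult_pos_pos[OF _ D2p]])
  qed
  finally have key: "Qc * (A / D1) \<le> A / D2" .
  have p1: "planck hb c kB \<nu> TM = A / D1" using assms by (simp add: planck_def A_def D1_def e1)
  have p2: "planck hb c kB \<nu> (max 1 Qc * TM) = A / D2"
    using assms s1 by (simp add: planck_def A_def D2_def y_def s_def[symmetric])
  show ?thesis using key p1 p2 by simp
qed

end

section \<open>Integrals against continuous kernels\<close>

lemma not_AE_lborel_nonpos: "\<not> (AE x in lborel. (x::real) \<le> 0)"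
proof
  assume "AE x in lborel. (x::real) \<le> 0"
  then have "emeasure lborel {x::real. \<not> x \<le> 0} = 0"
    by (subst (asm) AE_iff_measurable[of "{x::real. \<not> x \<le> 0}"]) auto
  moreover have "emeasure lborel {0<..<(1::real)} \<le> emeasure lborel {x::real. \<not> x \<le> 0}"
    by (intro emeasure_mono) auto
  ultimately show False by simp
qed

lemma borel_measurable_LINT_lborel[measurable (raw)]:
  fixes f :: "'a \<Rightarrow> real \<Rightarrow> real"
  assumes "case_prod f \<in> borel_measurable (N \<Otimes>\<^sub>M borel)"
  shows "(\<lambda>x. integral\<^sup>L lborel (f x)) \<in> borel_measurable N"
proof -
  have "case_prod f \<in> borel_measurable (N \<Otimes>\<^sub>M lborel)"
    using assms by (subst measurable_cong_sets[OF sets_pair_measure_cong[OF refl sets_lborel] refl])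
  then show ?thesis by (rule lborel.borel_measurable_lebesgue_integral)
qed

lemma borel_measurable_nn_integral_lborel[measurable (raw)]:
  fixes f :: "'a \<Rightarrow> real \<Rightarrow> ennreal"
  assumes "case_prod f \<in> borel_measurable (N \<Otimes>\<^sub>M borel)"
  shows "(\<lambda>x. integral\<^sup>N lborel (f x)) \<in> borel_measurable N"
proof -
  have "case_prod f \<in> borel_measurable (N \<Otimes>\<^sub>M lborel)"
    using assms by (subst measurable_cong_sets[OF sets_pair_measure_cong[OF refl sets_lborel] refl])
  then show ?thesis by (rule lborel.borel_measurable_nn_integral)
qed

lemma set_borel_measurable_cong_measurable:
  fixes s h :: "real \<Rightarrow> real"
  assumes "h \<in> borel_measurable borel" "\<And>t. t \<in> A \<Longrightarrow> s t = h t" "A \<in> sets borel"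
  shows "set_borel_measurable lborel A s"
proof -
  have "(\<lambda>t. indicator A t *\<^sub>R s t) = (\<lambda>t. indicator A t *\<^sub>R h t)"
    using assms(2) by (auto simp: fun_eq_iff indicator_def)
  moreover have "(\<lambda>t. indicator A t *\<^sub>R h t) \<in> borel_measurable borel"
    using assms(1,3) by (intro borel_measurable_scaleR borel_measurable_indicator) auto
  ultimately show ?thesis unfolding set_borel_measurable_def by simp
qed

lemma set_borel_measurable_mult_continuous:
  fixes K s :: "real \<Rightarrow> real"
  assumes K: "continuous_on UNIV K" and s: "set_borel_measurable lborel A s"
  shows "set_borel_measurable lborel A (\<lambda>t. K t * s t)"
proof -
  have "K \<in> borel_measurable borel" using K by (rule borel_measurable_continuous_onI)
  moreover have "(\<lambda>t. indicator A t *\<^sub>R s t) \<in> borel_measurable borel"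
    using s unfolding set_borel_measurable_def by simp
  ultimately have "(\<lambda>t. K t * (indicator A t *\<^sub>R s t)) \<in> borel_measurable borel"
    by (rule borel_measurable_times)
  moreover have "(\<lambda>t. K t * (indicator A t *\<^sub>R s t)) = (\<lambda>t. indicator A t *\<^sub>R (K t * s t))"
    by (auto simp: fun_eq_iff indicator_def)
  ultimately show ?thesis unfolding set_borel_measurable_def by simp
qed

lemma set_integrable_kernel_mult:
  fixes K s :: "real \<Rightarrow> real"
  assumes K: "continuous_on UNIV K" and s: "set_borel_measurable lborel {a..b} s"
    and C: "\<And>t. t \<in> {a..b} \<Longrightarrow> \<bar>s t\<bar> \<le> C"
  shows "set_integrable lborel {a..b} (\<lambda>t. K t * s t)"
proof (rule set_integrable_bound[where f="\<lambda>t. \<bar>K t\<bar> * C"])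
  show "set_integrable lborel {a..b} (\<lambda>t. \<bar>K t\<bar> * C)"
    by (intro borel_integrable_atLeastAtMost' continuous_intros continuous_on_subset[OF K]) auto
  show "set_borel_measurable lborel {a..b} (\<lambda>t. K t * s t)"
    by (rule set_borel_measurable_mult_continuous[OF K s])
  show "AE x in lborel. x \<in> {a..b} \<longrightarrow> norm (K x * s x) \<le> norm (\<bar>K x\<bar> * C)"
  proof (rule AE_I2, rule impI)
    fix x assume x: "x \<in> {a..b}"
    have "\<bar>K x\<bar> * \<bar>s x\<bar> \<le> \<bar>K x\<bar> * C" using C[OF x] by (intro mult_left_mono) auto
    moreover have "0 \<le> C" using C[OF x] by linarith
    ultimately show "norm (K x * s x) \<le> norm (\<bar>K x\<bar> * C)" by (simp add: abs_mult)
  qed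
qed

lemma set_integral_kernel_mono:
  fixes K s1 s2 :: "real \<Rightarrow> real"
  assumes K: "continuous_on UNIV K" "\<And>t. t \<in> {a..b} \<Longrightarrow> 0 \<le> K t"
    and s1: "set_borel_measurable lborel {a..b} s1" "\<And>t. t \<in> {a..b} \<Longrightarrow> \<bar>s1 t\<bar> \<le> C"
    and s2: "set_borel_measurable lborel {a..b} s2" "\<And>t. t \<in> {a..b} \<Longrightarrow> \<bar>s2 t\<bar> \<le> C"
    and le: "\<And>t. t \<in> {a..b} \<Longrightarrow> s1 t \<le> s2 t"
  shows "(LINT t:{a..b}|lborel. K t * s1 t) \<le> (LINT t:{a..b}|lborel. K t * s2 t)"
  by (intro set_integral_mono set_integrable_kernel_mult[OF K(1) s1] set_integrable_kernel_mult[OF K(1) s2]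
      mult_left_mono le K(2))

lemma set_integral_kernel_bounds:
  fixes K s :: "real \<Rightarrow> real"
  assumes K: "continuous_on UNIV K" "\<And>t. t \<in> {a..b} \<Longrightarrow> 0 \<le> K t"
    and s: "set_borel_measurable lborel {a..b} s" "\<And>t. t \<in> {a..b} \<Longrightarrow> 0 \<le> s t \<and> s t \<le> C"
  shows "0 \<le> (LINT t:{a..b}|lborel. K t * s t)"
    and "(LINT t:{a..b}|lborel. K t * s t) \<le> C * (LINT t:{a..b}|lborel. K t)"
proof -
  have C: "\<bar>s t\<bar> \<le> C" if "t \<in> {a..b}" for t using s(2)[OF that] by simp
  have const: "set_borel_measurable lborel {a..b} (\<lambda>t. d)" for d :: real
    by (simp add: set_borel_measurable_def)
  have "(LINT t:{a..b}|lborel. K t * 0) \<le> (LINT t:{a..b}|lborel. K t * s t)"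
    by (rule set_integral_kernel_mono[OF K const _ s(1) C]) (use s(2) C in force)+
  then show "0 \<le> (LINT t:{a..b}|lborel. K t * s t)" by simp
  have "(LINT t:{a..b}|lborel. K t * s t) \<le> (LINT t:{a..b}|lborel. K t * C)"
    by (rule set_integral_kernel_mono[OF K s(1) C const]) (use s(2) C in force)+
  then show "(LINT t:{a..b}|lborel. K t * s t) \<le> C * (LINT t:{a..b}|lborel. K t)"
    by (simp add: mult.commute)
qed

lemma tendsto_set_integral_kernel:
  fixes K s0 :: "real \<Rightarrow> real" and s :: "nat \<Rightarrow> real \<Rightarrow> real"
  assumes K: "continuous_on UNIV K"
    and sm: "\<And>n. set_borel_measurable lborel {a..b} (s n)"
    and s0m: "set_borel_measurable lborel {a..b} s0"
    and C: "\<And>n t. t \<in> {a..b} \<Longrightarrow> \<bar>s n t\<bar> \<le> C"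
    and lim: "\<And>t. t \<in> {a..b} \<Longrightarrow> (\<lambda>n. s n t) \<longlonglongrightarrow> s0 t"
  shows "(\<lambda>n. LINT t:{a..b}|lborel. K t * s n t) \<longlonglongrightarrow> (LINT t:{a..b}|lborel. K t * s0 t)"
  unfolding set_lebesgue_integral_def
proof (rule integral_dominated_convergence[where w="\<lambda>t. indicator {a..b} t *\<^sub>R (\<bar>K t\<bar> * C)"])
  show "(\<lambda>t. indicator {a..b} t *\<^sub>R (K t * s0 t)) \<in> borel_measurable lborel"
    using set_borel_measurable_mult_continuous[OF K s0m] unfolding set_borel_measurable_def by simp
  show "(\<lambda>t. indicator {a..b} t *\<^sub>R (K t * s n t)) \<in> borel_measurable lborel" for n
    using set_borel_measurable_mult_continuous[OF K sm] unfolding set_borel_measurable_def by simp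
  show "integrable lborel (\<lambda>t. indicator {a..b} t *\<^sub>R (\<bar>K t\<bar> * C))"
    using borel_integrable_atLeastAtMost'[of a b "\<lambda>t. \<bar>K t\<bar> * C"]
    unfolding set_integrable_def by (simp add: continuous_intros continuous_on_subset[OF K])
  show "AE x in lborel. (\<lambda>n. indicator {a..b} x *\<^sub>R (K x * s n x)) \<longlonglongrightarrow> indicator {a..b} x *\<^sub>R (K x * s0 x)"
  proof (rule AE_I2)
    fix x :: real
    show "(\<lambda>n. indicator {a..b} x *\<^sub>R (K x * s n x)) \<longlonglongrightarrow> indicator {a..b} x *\<^sub>R (K x * s0 x)"
      by (cases "x \<in> {a..b}") (auto intro!: tendsto_mult tendsto_const lim)
  qed
  show "AE x in lborel. norm (indicator {a..b} x *\<^sub>R (K x * s n x)) \<le> indicator {a..b} x *\<^sub>R (\<bar>K x\<bar> * C)" for n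
  proof (rule AE_I2)
    fix x :: real
    show "norm (indicator {a..b} x *\<^sub>R (K x * s n x)) \<le> indicator {a..b} x *\<^sub>R (\<bar>K x\<bar> * C)"
      using C[of x n] by (cases "x \<in> {a..b}") (simp_all add: abs_mult mult_left_mono)
  qed
qed

lemma LINT_exp_kernel_upto:
  fixes k m \<tau> :: real assumes "k > 0" "m > 0" "\<tau> \<ge> 0"
  shows "(LINT t:{0..\<tau>}|lborel. exp (- k * (\<tau> - t) / m) * (1 / m)) = (1 - exp (- k * \<tau> / m)) / k"
proof -
  have "(LINT t:{0..\<tau>}|lborel. exp (- k * (\<tau> - t) / m) * (1 / m))
      = (\<lambda>t. exp (- k * (\<tau> - t) / m) / k) \<tau> - (\<lambda>t. exp (- k * (\<tau> - t) / m) / k) 0"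
    unfolding set_lebesgue_integral_def
  proof (rule integral_FTC_atLeastAtMost[OF assms(3)])
    fix x
    have "((\<lambda>t. exp (- k * (\<tau> - t) / m) / k) has_real_derivative exp (- k * (\<tau> - x) / m) * (1 / m)) (at x)"
      using assms by (auto intro!: derivative_eq_intros)
    then show "((\<lambda>t. exp (- k * (\<tau> - t) / m) / k) has_vector_derivative exp (- k * (\<tau> - x) / m) * (1 / m))
        (at x within {0..\<tau>})"
      by (simp add: has_real_derivative_iff_has_vector_derivative has_vector_derivative_at_within)
  qed (use assms in \<open>auto intro!: continuous_intros\<close>)
  also have "\<dots> = (1 - exp (- k * \<tau> / m)) / k" by (simp add: diff_divide_distrib)
  finally show ?thesis .
qed

lemma LINT_exp_kernel_from:
  fixes k m \<tau> Z :: real assumes "k > 0" "m > 0" "\<tau> \<le> Z"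
  shows "(LINT t:{\<tau>..Z}|lborel. exp (- k * (t - \<tau>) / m) * (1 / m)) = (1 - exp (- k * (Z - \<tau>) / m)) / k"
proof -
  have "(LINT t:{\<tau>..Z}|lborel. exp (- k * (t - \<tau>) / m) * (1 / m))
      = (\<lambda>t. - exp (- k * (t - \<tau>) / m) / k) Z - (\<lambda>t. - exp (- k * (t - \<tau>) / m) / k) \<tau>"
    unfolding set_lebesgue_integral_def
  proof (rule integral_FTC_atLeastAtMost[OF assms(3)])
    fix x
    have "((\<lambda>t. - exp (- k * (t - \<tau>) / m) / k) has_real_derivative exp (- k * (x - \<tau>) / m) * (1 / m)) (at x)"
      using assms by (auto intro!: derivative_eq_intros)
    then show "((\<lambda>t. - exp (- k * (t - \<tau>) / m) / k) has_vector_derivative exp (- k * (x - \<tau>) / m) * (1 / m))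
        (at x within {\<tau>..Z})"
      by (simp add: has_real_derivative_iff_has_vector_derivative has_vector_derivative_at_within)
  qed (use assms in \<open>auto intro!: continuous_intros\<close>)
  also have "\<dots> = (1 - exp (- k * (Z - \<tau>) / m)) / k" by (simp add: diff_divide_distrib)
  finally show ?thesis .
qed

lemma attenuated_source_bounds:
  fixes K S :: "real \<Rightarrow> real"
  assumes K: "continuous_on UNIV K" "\<And>t. t \<in> {a..b} \<Longrightarrow> 0 \<le> K t"
    and KI: "(LINT t:{a..b}|lborel. K t) = (1 - e) / k"
    and k: "k > 0" and e: "0 \<le> e" "e \<le> 1"
    and S: "set_borel_measurable lborel {a..b} S" "\<And>t. t \<in> {a..b} \<Longrightarrow> 0 \<le> S t \<and> S t \<le> k * M"
    and q: "0 \<le> q" "q \<le> M"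
  shows "0 \<le> e * q + (LINT t:{a..b}|lborel. K t * S t) \<and> e * q + (LINT t:{a..b}|lborel. K t * S t) \<le> M"
proof -
  note bounds = set_integral_kernel_bounds[OF K S]
  have "k * M * ((1 - e) / k) = (1 - e) * M" using k by simp
  then have "(LINT t:{a..b}|lborel. K t * S t) \<le> (1 - e) * M" using bounds(2) by (simp add: KI)
  moreover have "e * q \<le> e * M" using e q by (intro mult_left_mono)
  ultimately show ?thesis using bounds(1) e q by (simp add: algebra_simps)
qed

lemma set_integral_Icc_cong_interior:
  fixes f g :: "real \<Rightarrow> real"
  assumes "\<And>x. a < x \<Longrightarrow> x < b \<Longrightarrow> f x = g x"
  shows "(LINT x:{a..b}|lborel. f x) = (LINT x:{a..b}|lborel. g x)"
  unfolding set_lebesgue_integral_def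
  by (rule integral_discrete_difference[where X="{a,b}"]) (auto simp: assms indicator_def)

lemma LINT_one_Icc: "(LINT x:{-1..(1::real)}|lborel. (1::real)) = 2"
  unfolding set_lebesgue_integral_def by (simp add: integral_indicator content_real)

lemma rayleigh_kernel_nonneg:
  fixes \<mu> x :: real assumes "\<bar>\<mu>\<bar> \<le> 1" "\<bar>x\<bar> \<le> 1"
  shows "0 \<le> (3 - \<mu>^2) + (3 * \<mu>^2 - 1) * x^2"
proof -
  have "\<mu>^2 \<le> 1" "x^2 \<le> 1" using assms by (auto simp: abs_square_le_1)
  moreover have "(3 - \<mu>^2) + (3 * \<mu>^2 - 1) * x^2 = (1 - \<mu>^2) + (1 - x^2) + 1 + 3 * (\<mu>^2 * x^2)"
    by (simp add: algebra_simps)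
  moreover have "0 \<le> \<mu>^2 * x^2" by simp
  ultimately show ?thesis by linarith
qed

lemma LINT_rayleigh_kernel:
  "(LINT x:{-1..1}|lborel. (3 - \<mu>^2) + (3 * \<mu>^2 - 1) * (x::real)^2) = 16/3"
proof -
  define F where "F x = (3 - \<mu>^2) * x + (3 * \<mu>^2 - 1) * x^3 / 3" for x :: real
  have "(LINT x:{-1..1}|lborel. (3 - \<mu>^2) + (3 * \<mu>^2 - 1) * (x::real)^2) = F 1 - F (-1)"
    unfolding set_lebesgue_integral_def
  proof (rule integral_FTC_atLeastAtMost[where F=F])
    fix x :: real
    have "(F has_real_derivative (3 - \<mu>^2) + (3 * \<mu>^2 - 1) * x^2) (at x)"
      unfolding F_def by (auto intro!: derivative_eq_intros simp: power2_eq_square)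
    then show "(F has_vector_derivative (3 - \<mu>^2) + (3 * \<mu>^2 - 1) * x^2) (at x within {-1..1})"
      by (simp add: has_real_derivative_iff_has_vector_derivative has_vector_derivative_at_within)
  qed (auto intro!: continuous_intros)
  also have "\<dots> = 16/3" unfolding F_def by (simp add: field_simps power3_eq_cube)
  finally show ?thesis .
qed

lemma rayleigh_moments_eq_LINT:
  fixes s :: "real \<Rightarrow> real"
  assumes "set_integrable lborel A s" "set_integrable lborel A (\<lambda>x. x^2 * s x)"
  shows "(3 - \<mu>^2) * (1/2 * (LINT x:A|lborel. s x)) + (3 * \<mu>^2 - 1) * (1/2 * (LINT x:A|lborel. x^2 * s x))
       = 1/2 * (LINT x:A|lborel. ((3 - \<mu>^2) + (3 * \<mu>^2 - 1) * x^2) * s x)"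
proof -
  define L1 where "L1 = (LINT x:A|lborel. s x)"
  define L2 where "L2 = (LINT x:A|lborel. x^2 * s x)"
  have "(\<lambda>x. ((3 - \<mu>^2) + (3 * \<mu>^2 - 1) * x^2) * s x) = (\<lambda>x. (3 - \<mu>^2) * s x + (3 * \<mu>^2 - 1) * (x^2 * s x))"
    by (rule ext) (simp add: algebra_simps)
  then have "(LINT x:A|lborel. ((3 - \<mu>^2) + (3 * \<mu>^2 - 1) * x^2) * s x)
       = (LINT x:A|lborel. (3 - \<mu>^2) * s x) + (LINT x:A|lborel. (3 * \<mu>^2 - 1) * (x^2 * s x))"
    using assms by (simp only: set_integral_add(2)[OF set_integrable_mult_right set_integrable_mult_right])
  also have "\<dots> = (3 - \<mu>^2) * L1 + (3 * \<mu>^2 - 1) * L2"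
    unfolding L1_def L2_def by (simp only: set_integral_mult_right)
  finally show ?thesis unfolding L1_def[symmetric] L2_def[symmetric] by (simp add: algebra_simps)
qed

lemma charsol_pos:
  "\<mu> > 0 \<Longrightarrow> charsol \<kappa> Qp Qm Z S \<nu> \<tau> \<mu> =
     exp (- \<kappa> \<nu> * \<tau> / \<mu>) * Qp \<nu> \<mu>
     + (LINT t:{0..\<tau>}|lborel. (exp (- \<kappa> \<nu> * (\<tau> - t) / \<mu>) * (1 / \<mu>)) * S \<nu> t \<mu>)"
  by (simp add: charsol_def)

lemma charsol_neg:
  "\<mu> < 0 \<Longrightarrow> charsol \<kappa> Qp Qm Z S \<nu> \<tau> \<mu> =
     exp (- \<kappa> \<nu> * (Z - \<tau>) / \<bar>\<mu>\<bar>) * Qm \<nu> \<bar>\<mu>\<bar>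
     + (LINT t:{\<tau>..Z}|lborel. (exp (- \<kappa> \<nu> * (t - \<tau>) / \<bar>\<mu>\<bar>) * (1 / \<bar>\<mu>\<bar>)) * S \<nu> t \<mu>)"
  by (simp add: charsol_def)

lemma charsol_zero: "charsol \<kappa> Qp Qm Z S \<nu> \<tau> 0 = 0"
  by (simp add: charsol_def)

section \<open>Emission and the temperature map\<close>

locale rte =
  fixes hb c kB Z \<kappa>M TM Qc :: real
    and \<kappa> ai ar :: "real \<Rightarrow> real"
    and Qp Qm :: "real \<Rightarrow> real \<Rightarrow> real"
  assumes phys: "hb > 0" "c > 0" "kB > 0"
    and Z: "Z > 0"
    and meas_\<kappa>: "\<kappa> \<in> borel_measurable (restrict_space borel {0<..})"
    and meas_ai: "ai \<in> borel_measurable (restrict_space borel {0<..})"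
    and meas_ar: "ar \<in> borel_measurable (restrict_space borel {0<..})"
    and \<kappa>_bd: "\<And>\<nu>. \<nu> > 0 \<Longrightarrow> 0 < \<kappa> \<nu> \<and> \<kappa> \<nu> \<le> \<kappa>M"
    and a_bd: "\<And>\<nu>. \<nu> > 0 \<Longrightarrow> ai \<nu> \<ge> 0 \<and> ar \<nu> \<ge> 0 \<and> ai \<nu> + ar \<nu> < 1"
    and meas_Qp: "(\<lambda>(\<mu>, \<nu>). Qp \<nu> \<mu>) \<in> borel_measurable (restrict_space borel ({0<..<1} \<times> {0<..}))"
    and meas_Qm: "(\<lambda>(\<mu>, \<nu>). Qm \<nu> \<mu>) \<in> borel_measurable (restrict_space borel ({0<..<1} \<times> {0<..}))"
    and TM: "TM > 0" and Qc: "Qc > 0"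
    and Q_bd: "\<And>\<mu> \<nu>. \<mu> \<in> {0<..<1} \<Longrightarrow> \<nu> > 0 \<Longrightarrow>
        0 \<le> Qp \<nu> \<mu> \<and> Qp \<nu> \<mu> \<le> Qc * planck hb c kB \<nu> TM \<and>
        0 \<le> Qm \<nu> \<mu> \<and> Qm \<nu> \<mu> \<le> Qc * planck hb c kB \<nu> TM"
begin

abbreviation B :: "real \<Rightarrow> real \<Rightarrow> real" where "B \<nu> T \<equiv> planck hb c kB \<nu> T"

definition Tmax :: real where "Tmax = max 1 Qc * TM"
definition Bmax :: "real \<Rightarrow> real" where "Bmax \<nu> = B \<nu> Tmax"

text \<open>Zero extensions off the physical domain are Borel on all of \<open>\<real>\<close>, so the \<open>measurable\<close> method applies to them.\<close>

definition \<kappa>0 :: "real \<Rightarrow> real" where "\<kappa>0 \<nu> = (if \<nu> > 0 then \<kappa> \<nu> else 0)"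
definition ai0 :: "real \<Rightarrow> real" where "ai0 \<nu> = (if \<nu> > 0 then ai \<nu> else 0)"
definition ar0 :: "real \<Rightarrow> real" where "ar0 \<nu> = (if \<nu> > 0 then ar \<nu> else 0)"
definition Qp0 :: "real \<Rightarrow> real \<Rightarrow> real" where "Qp0 \<nu> \<mu> = (if \<mu> \<in> {0<..<1} \<and> \<nu> > 0 then Qp \<nu> \<mu> else 0)"
definition Qm0 :: "real \<Rightarrow> real \<Rightarrow> real" where "Qm0 \<nu> \<mu> = (if \<mu> \<in> {0<..<1} \<and> \<nu> > 0 then Qm \<nu> \<mu> else 0)"
definition weight :: "real \<Rightarrow> real" where
  "weight \<nu> = (if \<nu> > 0 then \<kappa> \<nu> * (1 - (ai \<nu> + ar \<nu>)) else 0)"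

lemma Tmax_pos: "Tmax > 0"
  using TM by (simp add: Tmax_def)

lemma B_nonneg: "\<nu> \<ge> 0 \<Longrightarrow> 0 \<le> B \<nu> T"
  using planck_nonneg phys by blast

lemma B_mono: "\<nu> > 0 \<Longrightarrow> T1 \<le> T2 \<Longrightarrow> B \<nu> T1 \<le> B \<nu> T2"
  using planck_mono phys by blast

lemma B_strict_mono: "\<nu> > 0 \<Longrightarrow> T1 < T2 \<Longrightarrow> T2 > 0 \<Longrightarrow> B \<nu> T1 < B \<nu> T2"
  using planck_strict_mono phys by blast

lemma integrable_B: "T \<ge> 0 \<Longrightarrow> integrable lborel (\<lambda>\<nu>. B \<nu> T * indicator {0<..} \<nu>)"
  using integrable_planck phys by blast

lemma Bmax_nonneg: "\<nu> \<ge> 0 \<Longrightarrow> 0 \<le> Bmax \<nu>"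
  using B_nonneg by (simp add: Bmax_def)

lemma Q_le_Bmax: "\<mu> \<in> {0<..<1} \<Longrightarrow> \<nu> > 0 \<Longrightarrow> Qp \<nu> \<mu> \<le> Bmax \<nu> \<and> Qm \<nu> \<mu> \<le> Bmax \<nu>"
  using Q_bd[of \<mu> \<nu>] scaled_planck_le_planck[of hb c kB \<nu> TM Qc] phys TM Qc
  by (auto simp: Bmax_def Tmax_def)

lemma borel_measurable_extend_zero:
  "f \<in> borel_measurable (restrict_space borel {0<..}) \<Longrightarrow>
   (\<lambda>\<nu>::real. if \<nu> > 0 then f \<nu> else 0) \<in> borel_measurable borel"
  using measurable_restrict_space_iff[of "{0<..}" borel 0 borel f] by simp

lemma borel_measurable_\<kappa>0[measurable]: "\<kappa>0 \<in> borel_measurable borel"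
  unfolding \<kappa>0_def by (rule borel_measurable_extend_zero[OF meas_\<kappa>])

lemma borel_measurable_ai0[measurable]: "ai0 \<in> borel_measurable borel"
  unfolding ai0_def by (rule borel_measurable_extend_zero[OF meas_ai])

lemma borel_measurable_ar0[measurable]: "ar0 \<in> borel_measurable borel"
  unfolding ar0_def by (rule borel_measurable_extend_zero[OF meas_ar])

lemma borel_measurable_weight[measurable]: "weight \<in> borel_measurable borel"
proof -
  have "weight = (\<lambda>\<nu>. \<kappa>0 \<nu> * (1 - (ai0 \<nu> + ar0 \<nu>)))"
    by (auto simp: fun_eq_iff weight_def \<kappa>0_def ai0_def ar0_def)
  then show ?thesis by simp
qed

lemma borel_measurable_extend_zero_boundary:
  fixes Q :: "real \<Rightarrow> real \<Rightarrow> real"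
  assumes "(\<lambda>(\<mu>, \<nu>). Q \<nu> \<mu>) \<in> borel_measurable (restrict_space borel ({0<..<(1::real)} \<times> {(0::real)<..}))"
  shows "(\<lambda>x. if snd x \<in> {0<..<1} \<and> fst x > 0 then Q (fst x) (snd x) else 0)
           \<in> borel_measurable (borel \<Otimes>\<^sub>M borel)"
proof -
  define S where "S = {0<..<(1::real)} \<times> {(0::real)<..}"
  define g where "g = (\<lambda>p. if p \<in> S then (case p of (\<mu>, \<nu>) \<Rightarrow> Q \<nu> \<mu>) else (0::real))"
  have "S \<in> sets borel" unfolding S_def by (intro borel_open open_Times) auto
  then have "g \<in> borel_measurable borel"
    using measurable_restrict_space_iff[of S borel 0 borel "\<lambda>(\<mu>, \<nu>). Q \<nu> \<mu>"] assms
    by (simp add: g_def S_def)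
  then have [measurable]: "g \<in> borel_measurable (borel \<Otimes>\<^sub>M borel)" by (simp add: borel_prod)
  have "(\<lambda>x. g (snd x, fst x)) \<in> borel_measurable (borel \<Otimes>\<^sub>M borel)" by measurable
  moreover have "(\<lambda>x. g (snd x, fst x)) = (\<lambda>x. if snd x \<in> {0<..<1} \<and> fst x > 0 then Q (fst x) (snd x) else 0)"
    by (auto simp: g_def S_def)
  ultimately show ?thesis by simp
qed

lemma borel_measurable_Qp0_pair[measurable]:
  "(\<lambda>x. Qp0 (fst x) (snd x)) \<in> borel_measurable (borel \<Otimes>\<^sub>M borel)"
  using borel_measurable_extend_zero_boundary[OF meas_Qp] by (simp add: Qp0_def)

lemma borel_measurable_Qm0_pair[measurable]:
  "(\<lambda>x. Qm0 (fst x) (snd x)) \<in> borel_measurable (borel \<Otimes>\<^sub>M borel)"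
  using borel_measurable_extend_zero_boundary[OF meas_Qm] by (simp add: Qm0_def)

lemma borel_measurable_Qp0[measurable (raw)]:
  "u \<in> borel_measurable M \<Longrightarrow> v \<in> borel_measurable M \<Longrightarrow> (\<lambda>x. Qp0 (u x) (v x)) \<in> borel_measurable M"
  using measurable_compose[OF measurable_Pair borel_measurable_Qp0_pair] by simp

lemma borel_measurable_Qm0[measurable (raw)]:
  "u \<in> borel_measurable M \<Longrightarrow> v \<in> borel_measurable M \<Longrightarrow> (\<lambda>x. Qm0 (u x) (v x)) \<in> borel_measurable M"
  using measurable_compose[OF measurable_Pair borel_measurable_Qm0_pair] by simp

lemma weight_nonneg: "0 \<le> weight \<nu>"
  using \<kappa>_bd[of \<nu>] a_bd[of \<nu>] by (auto simp: weight_def)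

lemma weight_pos: "\<nu> > 0 \<Longrightarrow> 0 < weight \<nu>"
  using \<kappa>_bd[of \<nu>] a_bd[of \<nu>] by (auto simp: weight_def)

lemma weight_le: "weight \<nu> \<le> \<kappa>M"
proof (cases "\<nu> > 0")
  case True
  then have "weight \<nu> = \<kappa> \<nu> * (1 - (ai \<nu> + ar \<nu>))" by (simp add: weight_def)
  also have "\<dots> \<le> \<kappa> \<nu> * 1"
    using \<kappa>_bd[OF True] a_bd[OF True] by (intro mult_left_mono) auto
  also have "\<dots> \<le> \<kappa>M" using \<kappa>_bd[OF True] by simp
  finally show ?thesis .
next
  case False
  then show ?thesis using \<kappa>_bd[of 1] by (simp add: weight_def)
qed

lemma \<kappa>M_nonneg: "0 \<le> \<kappa>M"
  using weight_nonneg weight_le order_trans by blast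

lemma weight_B_nonneg: "0 \<le> weight \<nu> * B \<nu> T"
proof (cases "\<nu> > 0")
  case True
  then show ?thesis using weight_nonneg B_nonneg by simp
qed (simp add: weight_def)

lemma nn_integral_weight:
  "(\<integral>\<^sup>+ \<nu>. ennreal (\<kappa> \<nu> * (1 - (ai \<nu> + ar \<nu>)) * h \<nu>) * indicator {0<..} \<nu> \<partial>lborel)
   = (\<integral>\<^sup>+ \<nu>. ennreal (weight \<nu> * h \<nu>) \<partial>lborel)"
  by (intro nn_integral_cong) (auto simp: weight_def indicator_def)

definition emission :: "real \<Rightarrow> real" where
  "emission T = (LINT \<nu>|lborel. weight \<nu> * B \<nu> T)"

definition absorption :: "(real \<Rightarrow> real \<Rightarrow> real) \<Rightarrow> real \<Rightarrow> ennreal" where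
  "absorption J \<tau> = (\<integral>\<^sup>+\<nu>. ennreal (weight \<nu> * J \<nu> \<tau>) \<partial>lborel)"

lemma integrable_weight_B: "T \<ge> 0 \<Longrightarrow> integrable lborel (\<lambda>\<nu>. weight \<nu> * B \<nu> T)"
proof -
  assume T: "T \<ge> 0"
  have "integrable lborel (\<lambda>\<nu>. \<kappa>M * (B \<nu> T * indicator {0<..} \<nu>))"
    using integrable_B[OF T] by (intro integrable_mult_right)
  then show ?thesis
  proof (rule Bochner_Integration.integrable_bound)
    show "(\<lambda>\<nu>. weight \<nu> * B \<nu> T) \<in> borel_measurable lborel" by measurable
    show "AE x in lborel. norm (weight x * B x T) \<le> norm (\<kappa>M * (B x T * indicator {0<..} x))"
    proof (rule AE_I2)
      fix x :: real
      show "norm (weight x * B x T) \<le> norm (\<kappa>M * (B x T * indicator {0<..} x))"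
      proof (cases "x > 0")
        case True
        have "weight x * B x T \<le> \<kappa>M * B x T"
          using weight_le B_nonneg[of x T] True by (intro mult_right_mono) auto
        then show ?thesis using True weight_B_nonneg[of x T] by simp
      qed (simp add: weight_def)
    qed
  qed
qed

lemma nn_integral_weight_B: "T \<ge> 0 \<Longrightarrow> (\<integral>\<^sup>+ \<nu>. ennreal (weight \<nu> * B \<nu> T) \<partial>lborel) = ennreal (emission T)"
  unfolding emission_def by (intro nn_integral_eq_integral integrable_weight_B AE_I2 weight_B_nonneg)

lemma emission_nonneg: "0 \<le> emission T"
  unfolding emission_def by (intro integral_nonneg_AE AE_I2 weight_B_nonneg)

lemma emission_0: "emission 0 = 0"
  by (simp add: emission_def planck_def)

lemma emission_strict_mono:
  assumes "0 \<le> T1" "T1 < T2" shows "emission T1 < emission T2"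
proof -
  define d where "d \<nu> = weight \<nu> * B \<nu> T2 - weight \<nu> * B \<nu> T1" for \<nu>
  have id: "integrable lborel d"
    unfolding d_def using assms by (auto intro!: integrable_weight_B)
  have dnn: "0 \<le> d \<nu>" for \<nu>
  proof (cases "\<nu> > 0")
    case True
    then have "weight \<nu> * B \<nu> T1 \<le> weight \<nu> * B \<nu> T2"
      using assms weight_nonneg by (intro mult_left_mono B_mono) auto
    then show ?thesis by (simp add: d_def)
  qed (simp add: d_def weight_def)
  have dpos: "0 < d \<nu>" if "\<nu> > 0" for \<nu>
    using that assms weight_pos[OF that]
    by (auto simp: d_def intro!: mult_strict_left_mono B_strict_mono)
  have "emission T2 - emission T1 = integral\<^sup>L lborel d"
    unfolding emission_def d_def using assms
    by (intro Bochner_Integration.integral_diff[symmetric] integrable_weight_B) auto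
  moreover have "integral\<^sup>L lborel d \<noteq> 0"
  proof
    assume "integral\<^sup>L lborel d = 0"
    then have "AE x in lborel. d x = 0" using integral_nonneg_eq_0_iff_AE[OF id AE_I2[OF dnn]] by blast
    then have "AE x in lborel. (x::real) \<le> 0" by eventually_elim (metis dpos less_irrefl not_le)
    then show False using not_AE_lborel_nonpos by simp
  qed
  moreover have "0 \<le> integral\<^sup>L lborel d" using dnn by (intro integral_nonneg_AE) auto
  ultimately show ?thesis by simp
qed

lemma emission_mono: "0 \<le> T1 \<Longrightarrow> T1 \<le> T2 \<Longrightarrow> emission T1 \<le> emission T2"
  using emission_strict_mono[of T1 T2] by (cases "T1 = T2") auto

lemma continuous_on_emission: "continuous_on {0..} emission"
proof (rule continuous_on_sequentiallyI)
  fix u :: "nat \<Rightarrow> real" and a assume u: "\<forall>n. u n \<in> {0..}" "a \<in> {0..}" "u \<longlonglongrightarrow> a"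
  obtain K where K: "K > 0" "\<And>n. norm (u n) \<le> K"
    using BseqE convergent_imp_Bseq convergent_def u(3) by metis
  show "(\<lambda>n. emission (u n)) \<longlonglongrightarrow> emission a"
    unfolding emission_def
  proof (rule integral_dominated_convergence[where w="\<lambda>\<nu>. \<kappa>M * (B \<nu> K * indicator {0<..} \<nu>)"])
    show "(\<lambda>\<nu>. weight \<nu> * B \<nu> a) \<in> borel_measurable lborel" by measurable
    show "(\<lambda>\<nu>. weight \<nu> * B \<nu> (u n)) \<in> borel_measurable lborel" for n by measurable
    show "integrable lborel (\<lambda>\<nu>. \<kappa>M * (B \<nu> K * indicator {0<..} \<nu>))"
      using integrable_B[of K] K by (intro integrable_mult_right) auto
    show "AE x in lborel. (\<lambda>n. weight x * B x (u n)) \<longlonglongrightarrow> weight x * B x a"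
    proof (rule AE_I2)
      fix x :: real
      show "(\<lambda>n. weight x * B x (u n)) \<longlonglongrightarrow> weight x * B x a"
        by (cases "x > 0") (use u in \<open>auto simp: weight_def intro!: tendsto_mult tendsto_planck phys\<close>)
    qed
    show "AE x in lborel. norm (weight x * B x (u n)) \<le> \<kappa>M * (B x K * indicator {0<..} x)" for n
    proof (rule AE_I2)
      fix x :: real
      show "norm (weight x * B x (u n)) \<le> \<kappa>M * (B x K * indicator {0<..} x)"
      proof (cases "x > 0")
        case True
        have "weight x * B x (u n) \<le> \<kappa>M * B x K"
          using True weight_nonneg weight_le B_nonneg[of x] K(2)[of n] u(1) \<kappa>M_nonneg
          by (intro mult_mono B_mono) auto
        then show ?thesis using True weight_B_nonneg[of x "u n"] by simp
      qed (simp add: weight_def)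
    qed
  qed
qed

abbreviation TJ :: "(real \<Rightarrow> real \<Rightarrow> real) \<Rightarrow> real \<Rightarrow> real" where
  "TJ \<equiv> Tof hb c kB \<kappa> (\<lambda>\<nu>. ai \<nu> + ar \<nu>)"

lemma TJ_eq_The: "TJ J \<tau> = (THE T. T \<ge> 0 \<and> ennreal (emission T) = absorption J \<tau>)"
proof -
  have "T \<ge> 0 \<and> (\<integral>\<^sup>+\<nu>. ennreal (weight \<nu> * B \<nu> T) \<partial>lborel) = absorption J \<tau>
    \<longleftrightarrow> T \<ge> 0 \<and> ennreal (emission T) = absorption J \<tau>" for T
    using nn_integral_weight_B by auto
  then show ?thesis unfolding Tof_def nn_integral_weight absorption_def by simp
qed

lemma absorption_mono:
  assumes le: "\<And>\<nu>. \<nu> > 0 \<Longrightarrow> J1 \<nu> \<tau> \<le> J2 \<nu> \<tau>"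
  shows "absorption J1 \<tau> \<le> absorption J2 \<tau>"
  unfolding absorption_def
proof (intro nn_integral_mono)
  fix \<nu> :: real
  show "ennreal (weight \<nu> * J1 \<nu> \<tau>) \<le> ennreal (weight \<nu> * J2 \<nu> \<tau>)"
  proof (cases "\<nu> > 0")
    case True
    then show ?thesis using le[OF True] weight_nonneg by (intro ennreal_leI mult_left_mono)
  qed (simp add: weight_def)
qed

lemma TJ_characterization:
  assumes J: "\<And>\<nu>. \<nu> > 0 \<Longrightarrow> 0 \<le> J \<nu> \<tau> \<and> J \<nu> \<tau> \<le> Bmax \<nu>"
  shows "TJ J \<tau> \<in> {0..Tmax}" and "ennreal (emission (TJ J \<tau>)) = absorption J \<tau>"
proof -
  have "absorption J \<tau> \<le> absorption (\<lambda>\<nu> _. B \<nu> Tmax) \<tau>"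
    using J by (intro absorption_mono) (simp add: Bmax_def)
  also have "\<dots> = ennreal (emission Tmax)"
    unfolding absorption_def using Tmax_pos by (intro nn_integral_weight_B) simp
  finally have le: "absorption J \<tau> \<le> ennreal (emission Tmax)" .
  define r where "r = enn2real (absorption J \<tau>)"
  have "absorption J \<tau> < top" using le ennreal_less_top le_less_trans by blast
  then have r: "absorption J \<tau> = ennreal r" "0 \<le> r" by (auto simp: r_def ennreal_enn2real)
  with le have "r \<le> emission Tmax" using emission_nonneg[of Tmax] by (simp add: ennreal_le_iff)
  have "continuous_on {0..Tmax} emission" by (rule continuous_on_subset[OF continuous_on_emission]) auto
  then obtain T0 where T0: "0 \<le> T0" "T0 \<le> Tmax" "emission T0 = r"
    using IVT'[of emission 0 r Tmax] \<open>r \<le> emission Tmax\<close> emission_0 r Tmax_pos by auto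
  have "TJ J \<tau> = T0"
    unfolding TJ_eq_The
  proof (rule the_equality)
    fix T assume T: "T \<ge> 0 \<and> ennreal (emission T) = absorption J \<tau>"
    then have "emission T = emission T0" using T0 r emission_nonneg by simp
    then show "T = T0"
      using emission_strict_mono[of T T0] emission_strict_mono[of T0 T] T T0
      by (cases T T0 rule: linorder_cases) auto
  qed (use T0 r in simp)
  then show "TJ J \<tau> \<in> {0..Tmax}" "ennreal (emission (TJ J \<tau>)) = absorption J \<tau>"
    using T0 r by auto
qed

lemma TJ_le_iff:
  assumes J: "\<And>\<nu>. \<nu> > 0 \<Longrightarrow> 0 \<le> J \<nu> \<tau> \<and> J \<nu> \<tau> \<le> Bmax \<nu>" and s: "s \<ge> 0"
  shows "TJ J \<tau> \<le> s \<longleftrightarrow> absorption J \<tau> \<le> ennreal (emission s)"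
proof -
  note T = TJ_characterization[of J \<tau>, OF J]
  show ?thesis
  proof
    assume "TJ J \<tau> \<le> s"
    then show "absorption J \<tau> \<le> ennreal (emission s)"
      using T emission_mono[of "TJ J \<tau>" s] by (metis atLeastAtMost_iff ennreal_leI)
  next
    assume le: "absorption J \<tau> \<le> ennreal (emission s)"
    show "TJ J \<tau> \<le> s"
    proof (rule ccontr)
      assume "\<not> TJ J \<tau> \<le> s"
      then have "emission s < emission (TJ J \<tau>)" using emission_strict_mono[of s "TJ J \<tau>"] s by simp
      then have "ennreal (emission s) < ennreal (emission (TJ J \<tau>))"
        using emission_nonneg by (simp add: ennreal_less_iff)
      then show False using le T(2) by simp
    qed
  qed
qed

lemma TJ_mono:
  assumes J1: "\<And>\<nu>. \<nu> > 0 \<Longrightarrow> 0 \<le> J1 \<nu> \<tau> \<and> J1 \<nu> \<tau> \<le> Bmax \<nu>"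
    and J2: "\<And>\<nu>. \<nu> > 0 \<Longrightarrow> 0 \<le> J2 \<nu> \<tau> \<and> J2 \<nu> \<tau> \<le> Bmax \<nu>"
    and le: "\<And>\<nu>. \<nu> > 0 \<Longrightarrow> J1 \<nu> \<tau> \<le> J2 \<nu> \<tau>"
  shows "TJ J1 \<tau> \<le> TJ J2 \<tau>"
proof -
  note T2 = TJ_characterization[of J2 \<tau>, OF J2]
  have "absorption J1 \<tau> \<le> ennreal (emission (TJ J2 \<tau>))"
    using absorption_mono[of J1 \<tau> J2, OF le] T2(2) by simp
  then show ?thesis using TJ_le_iff[of J1 \<tau>, OF J1] T2(1) by simp
qed

section \<open>Admissible intensities, sources and characteristics\<close>

definition in_dom :: "real \<Rightarrow> real \<Rightarrow> real \<Rightarrow> bool" where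
  "in_dom \<nu> \<tau> \<mu> \<longleftrightarrow> \<nu> > 0 \<and> \<tau> \<in> {0..Z} \<and> \<mu> \<in> {-1<..<1}"

text \<open>
  An admissible intensity lies between \<open>0\<close> and \<open>Bmax\<close> and agrees on the domain with a Borel
  function \<open>E\<close> of \<open>(\<nu>, \<tau>, \<mu>)\<close>; the representative carries the joint measurability that the
  integrals over \<open>\<mu>\<close>, \<open>t\<close> and \<open>\<nu>\<close> require.
\<close>

definition admissible :: "(real \<Rightarrow> real \<Rightarrow> real \<Rightarrow> real) \<Rightarrow> (real \<times> real \<times> real \<Rightarrow> real) \<Rightarrow> bool" where
  "admissible I E \<longleftrightarrow> E \<in> borel_measurable (borel \<Otimes>\<^sub>M (borel \<Otimes>\<^sub>M borel)) \<and>
     (\<forall>\<nu> \<tau> \<mu>. in_dom \<nu> \<tau> \<mu> \<longrightarrow> I \<nu> \<tau> \<mu> = E (\<nu>, \<tau>, \<mu>) \<and> 0 \<le> I \<nu> \<tau> \<mu> \<and> I \<nu> \<tau> \<mu> \<le> Bmax \<nu>)"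

definition T_ext :: "(real \<Rightarrow> real) \<Rightarrow> real \<Rightarrow> real" where
  "T_ext T t = (if t \<in> {0..Z} then T t else 0)"

definition admissible_temp :: "(real \<Rightarrow> real) \<Rightarrow> bool" where
  "admissible_temp T \<longleftrightarrow> T_ext T \<in> borel_measurable borel \<and> (\<forall>t\<in>{0..Z}. 0 \<le> T t \<and> T t \<le> Tmax)"

lemma admissible_measurable: "admissible I E \<Longrightarrow> E \<in> borel_measurable (borel \<Otimes>\<^sub>M (borel \<Otimes>\<^sub>M borel))"
  by (simp add: admissible_def)

lemma admissibleD: "admissible I E \<Longrightarrow> in_dom \<nu> \<tau> \<mu> \<Longrightarrow> I \<nu> \<tau> \<mu> = E (\<nu>, \<tau>, \<mu>) \<and> 0 \<le> I \<nu> \<tau> \<mu> \<and> I \<nu> \<tau> \<mu> \<le> Bmax \<nu>"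
  unfolding admissible_def by blast

lemma admissible_tempD: "admissible_temp T \<Longrightarrow> t \<in> {0..Z} \<Longrightarrow> 0 \<le> T t \<and> T t \<le> Tmax"
  by (simp add: admissible_temp_def)

definition Ecut :: "(real \<times> real \<times> real \<Rightarrow> real) \<Rightarrow> real \<times> real \<times> real \<Rightarrow> real" where
  "Ecut E x = (if snd (snd x) \<in> {-1<..<1} then E x else 0)"

lemma borel_measurable_Ecut[measurable]:
  assumes [measurable]: "E \<in> borel_measurable (borel \<Otimes>\<^sub>M (borel \<Otimes>\<^sub>M borel))"
  shows "Ecut E \<in> borel_measurable (borel \<Otimes>\<^sub>M (borel \<Otimes>\<^sub>M borel))"
  unfolding Ecut_def greaterThanLessThan_iff by measurable

lemma admissible_Ecut:
  assumes "admissible I E" "\<nu> > 0" "t \<in> {0..Z}"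
  shows "\<And>x. x \<in> {-1<..<1} \<Longrightarrow> I \<nu> t x = Ecut E (\<nu>, t, x)"
    and "\<And>x. 0 \<le> Ecut E (\<nu>, t, x) \<and> Ecut E (\<nu>, t, x) \<le> Bmax \<nu>"
    and "set_borel_measurable lborel {-1..1} (\<lambda>x. Ecut E (\<nu>, t, x))"
proof -
  show "I \<nu> t x = Ecut E (\<nu>, t, x)" if "x \<in> {-1<..<1}" for x
    using admissibleD[OF assms(1), of \<nu> t x] assms that by (simp add: in_dom_def Ecut_def)
  show "0 \<le> Ecut E (\<nu>, t, x) \<and> Ecut E (\<nu>, t, x) \<le> Bmax \<nu>" for x
    using admissibleD[OF assms(1), of \<nu> t x] Bmax_nonneg[of \<nu>] assms
    by (cases "x \<in> {-1<..<1}") (auto simp: in_dom_def Ecut_def)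
  have [measurable]: "E \<in> borel_measurable (borel \<Otimes>\<^sub>M (borel \<Otimes>\<^sub>M borel))"
    using admissible_measurable[OF assms(1)] .
  have "(\<lambda>x. Ecut E (\<nu>, t, x)) \<in> borel_measurable borel" by measurable
  then show "set_borel_measurable lborel {-1..1} (\<lambda>x. Ecut E (\<nu>, t, x))"
    unfolding set_borel_measurable_def by (intro borel_measurable_scaleR borel_measurable_indicator) auto
qed

definition Jrep :: "(real \<times> real \<times> real \<Rightarrow> real) \<Rightarrow> real \<Rightarrow> real \<Rightarrow> real" where
  "Jrep E \<nu> t = 1/2 * (LINT x:{-1..1}|lborel. Ecut E (\<nu>, t, x))"

definition Krep :: "(real \<times> real \<times> real \<Rightarrow> real) \<Rightarrow> real \<Rightarrow> real \<Rightarrow> real" where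
  "Krep E \<nu> t = 1/2 * (LINT x:{-1..1}|lborel. x^2 * Ecut E (\<nu>, t, x))"

definition Srep :: "(real \<times> real \<times> real \<Rightarrow> real) \<Rightarrow> real \<Rightarrow> real \<Rightarrow> real \<Rightarrow> real" where
  "Srep E \<nu> t \<mu> = (3 - \<mu>^2) * Jrep E \<nu> t + (3 * \<mu>^2 - 1) * Krep E \<nu> t"

lemma borel_measurable_Jrep_pair[measurable]:
  assumes [measurable]: "E \<in> borel_measurable (borel \<Otimes>\<^sub>M (borel \<Otimes>\<^sub>M borel))"
  shows "(\<lambda>x. Jrep E (fst x) (snd x)) \<in> borel_measurable (borel \<Otimes>\<^sub>M borel)"
  unfolding Jrep_def set_lebesgue_integral_def indicator_def atLeastAtMost_iff by measurable

lemma borel_measurable_Krep_pair[measurable]: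
  assumes [measurable]: "E \<in> borel_measurable (borel \<Otimes>\<^sub>M (borel \<Otimes>\<^sub>M borel))"
  shows "(\<lambda>x. Krep E (fst x) (snd x)) \<in> borel_measurable (borel \<Otimes>\<^sub>M borel)"
  unfolding Krep_def set_lebesgue_integral_def indicator_def atLeastAtMost_iff by measurable

lemma borel_measurable_Jrep[measurable (raw)]:
  "E \<in> borel_measurable (borel \<Otimes>\<^sub>M (borel \<Otimes>\<^sub>M borel)) \<Longrightarrow> u \<in> borel_measurable M \<Longrightarrow>
   v \<in> borel_measurable M \<Longrightarrow> (\<lambda>x. Jrep E (u x) (v x)) \<in> borel_measurable M"
  using measurable_compose[OF measurable_Pair borel_measurable_Jrep_pair] by simp

lemma borel_measurable_Krep[measurable (raw)]:
  "E \<in> borel_measurable (borel \<Otimes>\<^sub>M (borel \<Otimes>\<^sub>M borel)) \<Longrightarrow> u \<in> borel_measurable M \<Longrightarrow>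
   v \<in> borel_measurable M \<Longrightarrow> (\<lambda>x. Krep E (u x) (v x)) \<in> borel_measurable M"
  using measurable_compose[OF measurable_Pair borel_measurable_Krep_pair] by simp

lemma Jmom_eq_Jrep: "admissible I E \<Longrightarrow> \<nu> > 0 \<Longrightarrow> t \<in> {0..Z} \<Longrightarrow> Jmom (I \<nu>) t = Jrep E \<nu> t"
  unfolding Jmom_def Jrep_def using admissible_Ecut(1)[of I E \<nu> t]
  by (subst set_integral_Icc_cong_interior[where g="\<lambda>x. Ecut E (\<nu>, t, x)"]) auto

lemma Kmom_eq_Krep: "admissible I E \<Longrightarrow> \<nu> > 0 \<Longrightarrow> t \<in> {0..Z} \<Longrightarrow> Kmom (I \<nu>) t = Krep E \<nu> t"
  unfolding Kmom_def Krep_def using admissible_Ecut(1)[of I E \<nu> t]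
  by (subst set_integral_Icc_cong_interior[where g="\<lambda>x. x^2 * Ecut E (\<nu>, t, x)"]) auto

lemma Jrep_bounds:
  assumes "admissible I E" "\<nu> > 0" "t \<in> {0..Z}"
  shows "0 \<le> Jrep E \<nu> t" "Jrep E \<nu> t \<le> Bmax \<nu>"
proof -
  note bounds = set_integral_kernel_bounds[where K="\<lambda>_. 1" and a="-1" and b=1,
      OF continuous_on_const _ admissible_Ecut(3)[OF assms] admissible_Ecut(2)[OF assms]]
  show "0 \<le> Jrep E \<nu> t" using bounds(1) by (simp add: Jrep_def)
  show "Jrep E \<nu> t \<le> Bmax \<nu>" using bounds(2)[unfolded LINT_one_Icc] by (simp add: Jrep_def)
qed

lemma Jmom_bounds: "admissible I E \<Longrightarrow> \<nu> > 0 \<Longrightarrow> \<tau> \<in> {0..Z} \<Longrightarrow> 0 \<le> Jmom (I \<nu>) \<tau> \<and> Jmom (I \<nu>) \<tau> \<le> Bmax \<nu>"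
  using Jrep_bounds Jmom_eq_Jrep by simp

lemma Ecut_abs_le: "admissible I E \<Longrightarrow> \<nu> > 0 \<Longrightarrow> t \<in> {0..Z} \<Longrightarrow> \<bar>Ecut E (\<nu>, t, x)\<bar> \<le> Bmax \<nu>"
  using admissible_Ecut(2)[of I E \<nu> t x] by (simp add: abs_le_iff)

lemma Srep_eq_LINT:
  assumes "admissible I E" "\<nu> > 0" "t \<in> {0..Z}"
  shows "Srep E \<nu> t \<mu> = 1/2 * (LINT x:{-1..1}|lborel. ((3 - \<mu>^2) + (3 * \<mu>^2 - 1) * x^2) * Ecut E (\<nu>, t, x))"
proof -
  have int: "set_integrable lborel {-1..1} (\<lambda>x. K x * Ecut E (\<nu>, t, x))" if "continuous_on UNIV K" for K
    using set_integrable_kernel_mult[OF that admissible_Ecut(3)[OF assms] Ecut_abs_le[OF assms]] .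
  have "set_integrable lborel {-1..1} (\<lambda>x. 1 * Ecut E (\<nu>, t, x))" by (rule int) (rule continuous_on_const)
  moreover have "set_integrable lborel {-1..1} (\<lambda>x. x^2 * Ecut E (\<nu>, t, x))" by (rule int) (intro continuous_intros)
  ultimately show ?thesis
    unfolding Srep_def Jrep_def Krep_def
    using rayleigh_moments_eq_LINT[of "{-1..1}" "\<lambda>x. Ecut E (\<nu>, t, x)" \<mu>] by simp
qed

lemma Srep_bounds:
  assumes "admissible I E" "\<nu> > 0" "t \<in> {0..Z}" "\<bar>\<mu>\<bar> \<le> 1"
  shows "0 \<le> Srep E \<nu> t \<mu>" "Srep E \<nu> t \<mu> \<le> 8/3 * Bmax \<nu>"
proof -
  have K: "continuous_on UNIV (\<lambda>x::real. (3 - \<mu>^2) + (3 * \<mu>^2 - 1) * x^2)" by (intro continuous_intros)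
  have "0 \<le> (3 - \<mu>^2) + (3 * \<mu>^2 - 1) * x^2" if "x \<in> {-1..1}" for x
    using assms(4) that by (intro rayleigh_kernel_nonneg) auto
  note bounds = set_integral_kernel_bounds[where a="-1" and b=1,
      OF K this admissible_Ecut(3)[OF assms(1-3)] admissible_Ecut(2)[OF assms(1-3)]]
  show "0 \<le> Srep E \<nu> t \<mu>" using bounds(1) Srep_eq_LINT[OF assms(1-3), of \<mu>] by linarith
  show "Srep E \<nu> t \<mu> \<le> 8/3 * Bmax \<nu>"
    using bounds(2)[unfolded LINT_rayleigh_kernel] Srep_eq_LINT[OF assms(1-3), of \<mu>] by linarith
qed

lemma Ecut_mono:
  assumes "admissible I1 E1" "admissible I2 E2" "\<nu> > 0" "t \<in> {0..Z}"
    and le: "\<And>\<mu>. in_dom \<nu> t \<mu> \<Longrightarrow> I1 \<nu> t \<mu> \<le> I2 \<nu> t \<mu>"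
  shows "Ecut E1 (\<nu>, t, x) \<le> Ecut E2 (\<nu>, t, x)"
  using le[of x] admissible_Ecut(1)[OF assms(1,3,4), of x] admissible_Ecut(1)[OF assms(2,3,4), of x] assms(3,4)
  by (cases "x \<in> {-1<..<1}") (auto simp: in_dom_def Ecut_def)

lemma Jrep_mono:
  assumes "admissible I1 E1" "admissible I2 E2" "\<nu> > 0" "t \<in> {0..Z}"
    and le: "\<And>\<mu>. in_dom \<nu> t \<mu> \<Longrightarrow> I1 \<nu> t \<mu> \<le> I2 \<nu> t \<mu>"
  shows "Jrep E1 \<nu> t \<le> Jrep E2 \<nu> t"
proof -
  have "(LINT x:{-1..1}|lborel. 1 * Ecut E1 (\<nu>, t, x)) \<le> (LINT x:{-1..1}|lborel. 1 * Ecut E2 (\<nu>, t, x))"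
    by (rule set_integral_kernel_mono[OF continuous_on_const _
          admissible_Ecut(3)[OF assms(1,3,4)] Ecut_abs_le[OF assms(1,3,4)]
          admissible_Ecut(3)[OF assms(2,3,4)] Ecut_abs_le[OF assms(2,3,4)] Ecut_mono[OF assms]])
       simp
  then show ?thesis by (simp add: Jrep_def)
qed

lemma Srep_mono:
  assumes "admissible I1 E1" "admissible I2 E2" "\<nu> > 0" "t \<in> {0..Z}" "\<bar>\<mu>\<bar> \<le> 1"
    and le: "\<And>\<mu>. in_dom \<nu> t \<mu> \<Longrightarrow> I1 \<nu> t \<mu> \<le> I2 \<nu> t \<mu>"
  shows "Srep E1 \<nu> t \<mu> \<le> Srep E2 \<nu> t \<mu>"
proof -
  have K: "continuous_on UNIV (\<lambda>x::real. (3 - \<mu>^2) + (3 * \<mu>^2 - 1) * x^2)" by (intro continuous_intros)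
  have "0 \<le> (3 - \<mu>^2) + (3 * \<mu>^2 - 1) * x^2" if "x \<in> {-1..1}" for x
    using assms(5) that by (intro rayleigh_kernel_nonneg) auto
  then have "(LINT x:{-1..1}|lborel. ((3 - \<mu>^2) + (3 * \<mu>^2 - 1) * x^2) * Ecut E1 (\<nu>, t, x))
      \<le> (LINT x:{-1..1}|lborel. ((3 - \<mu>^2) + (3 * \<mu>^2 - 1) * x^2) * Ecut E2 (\<nu>, t, x))"
    by (rule set_integral_kernel_mono[OF K _
          admissible_Ecut(3)[OF assms(1,3,4)] Ecut_abs_le[OF assms(1,3,4)]
          admissible_Ecut(3)[OF assms(2,3,4)] Ecut_abs_le[OF assms(2,3,4)] Ecut_mono[OF assms(1-4) le]])
  then show ?thesis using Srep_eq_LINT[OF assms(1,3,4), of \<mu>] Srep_eq_LINT[OF assms(2,3,4), of \<mu>] by linarith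
qed

definition srcrep :: "(real \<times> real \<times> real \<Rightarrow> real) \<Rightarrow> (real \<Rightarrow> real) \<Rightarrow> real \<Rightarrow> real \<Rightarrow> real \<Rightarrow> real" where
  "srcrep E T \<nu> t \<mu> = \<kappa>0 \<nu> * (1 - (ai0 \<nu> + ar0 \<nu>)) * B \<nu> (T_ext T t) + \<kappa>0 \<nu> * ai0 \<nu> * Jrep E \<nu> t
     + 3/8 * \<kappa>0 \<nu> * ar0 \<nu> * Srep E \<nu> t \<mu>"

lemma borel_measurable_srcrep[measurable (raw)]:
  assumes [measurable]: "E \<in> borel_measurable (borel \<Otimes>\<^sub>M (borel \<Otimes>\<^sub>M borel))" "T_ext T \<in> borel_measurable borel"
    and [measurable]: "u \<in> borel_measurable M" "v \<in> borel_measurable M" "k \<in> borel_measurable M"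
  shows "(\<lambda>x. srcrep E T (u x) (v x) (k x)) \<in> borel_measurable M"
  unfolding srcrep_def Srep_def by measurable

lemma srcrep_eq:
  "\<nu> > 0 \<Longrightarrow> srcrep E T \<nu> t \<mu> = \<kappa> \<nu> * (1 - (ai \<nu> + ar \<nu>)) * B \<nu> (T_ext T t) + \<kappa> \<nu> * ai \<nu> * Jrep E \<nu> t
     + 3/8 * \<kappa> \<nu> * ar \<nu> * Srep E \<nu> t \<mu>"
  by (simp add: srcrep_def \<kappa>0_def ai0_def ar0_def)

lemma src_eq_srcrep:
  assumes "admissible I E" "\<nu> > 0" "t \<in> {0..Z}"
  shows "src hb c kB \<kappa> ai ar I T \<nu> t \<mu> = srcrep E T \<nu> t \<mu>"
  unfolding src_def srcrep_eq[OF assms(2)] Srep_def Jmom_eq_Jrep[OF assms] Kmom_eq_Krep[OF assms]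
  using assms(3) by (simp add: T_ext_def)

lemma source_coefficients_nonneg:
  assumes "\<nu> > 0"
  shows "0 \<le> \<kappa> \<nu> * (1 - (ai \<nu> + ar \<nu>))" "0 \<le> \<kappa> \<nu> * ai \<nu>" "0 \<le> 3/8 * \<kappa> \<nu> * ar \<nu>"
  using \<kappa>_bd[OF assms] a_bd[OF assms] by simp_all

lemma srcrep_bounds:
  assumes "admissible I E" "admissible_temp T" "\<nu> > 0" "t \<in> {0..Z}" "\<bar>\<mu>\<bar> \<le> 1"
  shows "0 \<le> srcrep E T \<nu> t \<mu> \<and> srcrep E T \<nu> t \<mu> \<le> \<kappa> \<nu> * Bmax \<nu>"
proof -
  note c = source_coefficients_nonneg[OF assms(3)]
  have B: "0 \<le> B \<nu> (T_ext T t)" "B \<nu> (T_ext T t) \<le> Bmax \<nu>"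
    using B_nonneg[of \<nu>] B_mono[of \<nu> "T t" Tmax] admissible_tempD[OF assms(2,4)] assms(3,4)
    by (auto simp: T_ext_def Bmax_def)
  note J = Jrep_bounds[OF assms(1,3,4)] and S = Srep_bounds[OF assms(1,3,4,5)]
  have "\<kappa> \<nu> * (1 - (ai \<nu> + ar \<nu>)) * B \<nu> (T_ext T t) \<le> \<kappa> \<nu> * (1 - (ai \<nu> + ar \<nu>)) * Bmax \<nu>"
    using c B by (intro mult_left_mono) auto
  moreover have "\<kappa> \<nu> * ai \<nu> * Jrep E \<nu> t \<le> \<kappa> \<nu> * ai \<nu> * Bmax \<nu>"
    using c J by (intro mult_left_mono) auto
  moreover have "3/8 * \<kappa> \<nu> * ar \<nu> * Srep E \<nu> t \<mu> \<le> 3/8 * \<kappa> \<nu> * ar \<nu> * (8/3 * Bmax \<nu>)"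
    using c S by (intro mult_left_mono) auto
  moreover have "\<kappa> \<nu> * (1 - (ai \<nu> + ar \<nu>)) * Bmax \<nu> + \<kappa> \<nu> * ai \<nu> * Bmax \<nu>
      + 3/8 * \<kappa> \<nu> * ar \<nu> * (8/3 * Bmax \<nu>) = \<kappa> \<nu> * Bmax \<nu>"
    by (simp add: algebra_simps)
  ultimately show ?thesis unfolding srcrep_eq[OF assms(3)] using c B J S by simp
qed

lemma srcrep_mono:
  assumes "admissible I1 E1" "admissible I2 E2" "\<nu> > 0" "t \<in> {0..Z}" "\<bar>\<mu>\<bar> \<le> 1"
    and leI: "\<And>\<mu>. in_dom \<nu> t \<mu> \<Longrightarrow> I1 \<nu> t \<mu> \<le> I2 \<nu> t \<mu>" and leT: "T1 t \<le> T2 t"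
  shows "srcrep E1 T1 \<nu> t \<mu> \<le> srcrep E2 T2 \<nu> t \<mu>"
proof -
  note c = source_coefficients_nonneg[OF assms(3)]
  have "B \<nu> (T_ext T1 t) \<le> B \<nu> (T_ext T2 t)" using B_mono[OF assms(3) leT] assms(4) by (simp add: T_ext_def)
  moreover note Jrep_mono[OF assms(1-4) leI] Srep_mono[OF assms(1-5) leI]
  ultimately show ?thesis
    unfolding srcrep_eq[OF assms(3)] using c by (intro add_mono mult_left_mono) auto
qed

lemma charsol_src_eq_charsol_srcrep:
  assumes "admissible I E" "in_dom \<nu> \<tau> \<mu>"
  shows "charsol \<kappa> Qp Qm Z (src hb c kB \<kappa> ai ar I T) \<nu> \<tau> \<mu> = charsol \<kappa>0 Qp0 Qm0 Z (srcrep E T) \<nu> \<tau> \<mu>"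
proof -
  have r: "\<nu> > 0" "0 \<le> \<tau>" "\<tau> \<le> Z" "-1 < \<mu>" "\<mu> < 1" using assms(2) by (auto simp: in_dom_def)
  have fwd: "(LINT t:{0..\<tau>}|lborel. exp (- \<kappa> \<nu> * (\<tau> - t) / \<mu>) * (1 / \<mu>) * src hb c kB \<kappa> ai ar I T \<nu> t \<mu>)
     = (LINT t:{0..\<tau>}|lborel. exp (- \<kappa>0 \<nu> * (\<tau> - t) / \<mu>) * (1 / \<mu>) * srcrep E T \<nu> t \<mu>)"
    by (rule set_lebesgue_integral_cong) (use r in \<open>auto simp: \<kappa>0_def src_eq_srcrep[OF assms(1)]\<close>)
  have bwd: "(LINT t:{\<tau>..Z}|lborel. exp (- \<kappa> \<nu> * (t - \<tau>) / \<bar>\<mu>\<bar>) * (1 / \<bar>\<mu>\<bar>) * src hb c kB \<kappa> ai ar I T \<nu> t \<mu>)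
     = (LINT t:{\<tau>..Z}|lborel. exp (- \<kappa>0 \<nu> * (t - \<tau>) / \<bar>\<mu>\<bar>) * (1 / \<bar>\<mu>\<bar>) * srcrep E T \<nu> t \<mu>)"
    by (rule set_lebesgue_integral_cong) (use r in \<open>auto simp: \<kappa>0_def src_eq_srcrep[OF assms(1)]\<close>)
  show ?thesis unfolding charsol_def fwd bwd using r by (simp add: \<kappa>0_def Qp0_def Qm0_def)
qed

lemma borel_measurable_charsol_srcrep:
  assumes [measurable]: "E \<in> borel_measurable (borel \<Otimes>\<^sub>M (borel \<Otimes>\<^sub>M borel))" "T_ext T \<in> borel_measurable borel"
  shows "(\<lambda>x. charsol \<kappa>0 Qp0 Qm0 Z (srcrep E T) (fst x) (fst (snd x)) (snd (snd x)))
           \<in> borel_measurable (borel \<Otimes>\<^sub>M (borel \<Otimes>\<^sub>M borel))"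
  unfolding charsol_def set_lebesgue_integral_def indicator_def atLeastAtMost_iff by measurable

definition meas_slice :: "(real \<Rightarrow> real \<Rightarrow> real \<Rightarrow> real) \<Rightarrow> real \<Rightarrow> real \<Rightarrow> bool" where
  "meas_slice S \<nu> \<mu> \<longleftrightarrow> (\<exists>h \<in> borel_measurable borel. \<forall>t\<in>{0..Z}. S \<nu> t \<mu> = h t)"

lemma meas_slice_set_borel_measurable:
  assumes "meas_slice S \<nu> \<mu>" "{a..b} \<subseteq> {0..Z}"
  shows "set_borel_measurable lborel {a..b} (\<lambda>t. S \<nu> t \<mu>)"
proof -
  obtain h where h: "h \<in> borel_measurable borel" "\<And>t. t\<in>{0..Z} \<Longrightarrow> S \<nu> t \<mu> = h t"
    using assms(1) by (auto simp: meas_slice_def)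
  show ?thesis by (rule set_borel_measurable_cong_measurable[OF h(1)]) (use h(2) assms(2) in auto)
qed

lemma meas_slice_src:
  assumes "admissible I E" "admissible_temp T" "\<nu> > 0"
  shows "meas_slice (src hb c kB \<kappa> ai ar I T) \<nu> \<mu>"
proof -
  have [measurable]: "E \<in> borel_measurable (borel \<Otimes>\<^sub>M (borel \<Otimes>\<^sub>M borel))" "T_ext T \<in> borel_measurable borel"
    using assms by (auto simp: admissible_def admissible_temp_def)
  have "(\<lambda>t. srcrep E T \<nu> t \<mu>) \<in> borel_measurable borel" by measurable
  then show ?thesis unfolding meas_slice_def
    by (rule bexI[rotated]) (use src_eq_srcrep[OF assms(1,3)] in auto)
qed

lemma src_bounds:
  assumes "admissible I E" "admissible_temp T" "\<nu> > 0" "t \<in> {0..Z}" "\<bar>\<mu>\<bar> \<le> 1"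
  shows "0 \<le> src hb c kB \<kappa> ai ar I T \<nu> t \<mu> \<and> src hb c kB \<kappa> ai ar I T \<nu> t \<mu> \<le> \<kappa> \<nu> * Bmax \<nu>"
  using srcrep_bounds[OF assms] src_eq_srcrep[OF assms(1,3,4)] by simp

lemma charsol_bounds:
  assumes R: "in_dom \<nu> \<tau> \<mu>" and ms: "meas_slice S \<nu> \<mu>"
    and bd: "\<And>t. t \<in> {0..Z} \<Longrightarrow> 0 \<le> S \<nu> t \<mu> \<and> S \<nu> t \<mu> \<le> \<kappa> \<nu> * Bmax \<nu>"
  shows "0 \<le> charsol \<kappa> Qp Qm Z S \<nu> \<tau> \<mu> \<and> charsol \<kappa> Qp Qm Z S \<nu> \<tau> \<mu> \<le> Bmax \<nu>"
proof -
  have r: "\<nu> > 0" "0 \<le> \<tau>" "\<tau> \<le> Z" "-1 < \<mu>" "\<mu> < 1" using R by (auto simp: in_dom_def)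
  have k: "\<kappa> \<nu> > 0" using \<kappa>_bd r by auto
  consider "\<mu> > 0" | "\<mu> < 0" | "\<mu> = 0" by linarith
  then show ?thesis
  proof cases
    case 1
    have sub: "{0..\<tau>} \<subseteq> {0..Z}" using r by auto
    show ?thesis unfolding charsol_pos[OF 1]
      by (rule attenuated_source_bounds[OF _ _ LINT_exp_kernel_upto[OF k 1 r(2)] k _ _
            meas_slice_set_borel_measurable[OF ms sub]])
         (use 1 k r bd sub Q_bd[of \<mu> \<nu>] Q_le_Bmax[of \<mu> \<nu>] in \<open>auto intro!: continuous_intros\<close>)
  next
    case 2
    have sub: "{\<tau>..Z} \<subseteq> {0..Z}" using r by auto
    have m: "\<bar>\<mu>\<bar> > 0" "\<bar>\<mu>\<bar> \<in> {0<..<1}" using 2 r by auto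
    show ?thesis unfolding charsol_neg[OF 2]
      by (rule attenuated_source_bounds[OF _ _ LINT_exp_kernel_from[OF k m(1) r(3)] k _ _
            meas_slice_set_borel_measurable[OF ms sub]])
         (use m k r bd sub Q_bd[OF m(2) r(1)] Q_le_Bmax[OF m(2) r(1)] in \<open>auto intro!: continuous_intros\<close>)
  qed (use Bmax_nonneg[of \<nu>] r in \<open>simp add: charsol_zero\<close>)
qed

lemma charsol_mono:
  assumes R: "in_dom \<nu> \<tau> \<mu>" and ms1: "meas_slice S1 \<nu> \<mu>" and ms2: "meas_slice S2 \<nu> \<mu>"
    and b1: "\<And>t. t \<in> {0..Z} \<Longrightarrow> \<bar>S1 \<nu> t \<mu>\<bar> \<le> C" and b2: "\<And>t. t \<in> {0..Z} \<Longrightarrow> \<bar>S2 \<nu> t \<mu>\<bar> \<le> C"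
    and le: "\<And>t. t \<in> {0..Z} \<Longrightarrow> S1 \<nu> t \<mu> \<le> S2 \<nu> t \<mu>"
  shows "charsol \<kappa> Qp Qm Z S1 \<nu> \<tau> \<mu> \<le> charsol \<kappa> Qp Qm Z S2 \<nu> \<tau> \<mu>"
proof -
  have r: "0 \<le> \<tau>" "\<tau> \<le> Z" using R by (auto simp: in_dom_def)
  consider "\<mu> > 0" | "\<mu> < 0" | "\<mu> = 0" by linarith
  then show ?thesis
  proof cases
    case 1
    have sub: "{0..\<tau>} \<subseteq> {0..Z}" using r by auto
    have "(LINT t:{0..\<tau>}|lborel. (exp (- \<kappa> \<nu> * (\<tau> - t) / \<mu>) * (1 / \<mu>)) * S1 \<nu> t \<mu>)
       \<le> (LINT t:{0..\<tau>}|lborel. (exp (- \<kappa> \<nu> * (\<tau> - t) / \<mu>) * (1 / \<mu>)) * S2 \<nu> t \<mu>)"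
      by (rule set_integral_kernel_mono[where C=C, OF _ _ meas_slice_set_borel_measurable[OF ms1 sub] _
            meas_slice_set_borel_measurable[OF ms2 sub]])
         (use 1 sub b1 b2 le in \<open>auto intro!: continuous_intros\<close>)
    then show ?thesis unfolding charsol_pos[OF 1] by simp
  next
    case 2
    have sub: "{\<tau>..Z} \<subseteq> {0..Z}" using r by auto
    have "(LINT t:{\<tau>..Z}|lborel. (exp (- \<kappa> \<nu> * (t - \<tau>) / \<bar>\<mu>\<bar>) * (1 / \<bar>\<mu>\<bar>)) * S1 \<nu> t \<mu>)
       \<le> (LINT t:{\<tau>..Z}|lborel. (exp (- \<kappa> \<nu> * (t - \<tau>) / \<bar>\<mu>\<bar>) * (1 / \<bar>\<mu>\<bar>)) * S2 \<nu> t \<mu>)"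
    proof (rule set_integral_kernel_mono[where C=C, OF _ _ meas_slice_set_borel_measurable[OF ms1 sub] _
            meas_slice_set_borel_measurable[OF ms2 sub]])
      show "0 \<le> exp (- \<kappa> \<nu> * (t - \<tau>) / \<bar>\<mu>\<bar>) * (1 / \<bar>\<mu>\<bar>)" for t by simp
    qed (use 2 sub b1 b2 le in \<open>auto intro!: continuous_intros\<close>)
    then show ?thesis unfolding charsol_neg[OF 2] by simp
  qed (simp add: charsol_zero)
qed

lemma tendsto_charsol:
  assumes R: "in_dom \<nu> \<tau> \<mu>" and ms: "\<And>n. meas_slice (S n) \<nu> \<mu>" and ms0: "meas_slice S0 \<nu> \<mu>"
    and b: "\<And>n t. t \<in> {0..Z} \<Longrightarrow> \<bar>S n \<nu> t \<mu>\<bar> \<le> C"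
    and lim: "\<And>t. t \<in> {0..Z} \<Longrightarrow> (\<lambda>n. S n \<nu> t \<mu>) \<longlonglongrightarrow> S0 \<nu> t \<mu>"
  shows "(\<lambda>n. charsol \<kappa> Qp Qm Z (S n) \<nu> \<tau> \<mu>) \<longlonglongrightarrow> charsol \<kappa> Qp Qm Z S0 \<nu> \<tau> \<mu>"
proof -
  have r: "0 \<le> \<tau>" "\<tau> \<le> Z" using R by (auto simp: in_dom_def)
  consider "\<mu> > 0" | "\<mu> < 0" | "\<mu> = 0" by linarith
  then show ?thesis
  proof cases
    case 1
    have sub: "{0..\<tau>} \<subseteq> {0..Z}" using r by auto
    have "(\<lambda>n. LINT t:{0..\<tau>}|lborel. (exp (- \<kappa> \<nu> * (\<tau> - t) / \<mu>) * (1 / \<mu>)) * S n \<nu> t \<mu>)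
       \<longlonglongrightarrow> (LINT t:{0..\<tau>}|lborel. (exp (- \<kappa> \<nu> * (\<tau> - t) / \<mu>) * (1 / \<mu>)) * S0 \<nu> t \<mu>)"
      by (rule tendsto_set_integral_kernel[where C=C, OF _ meas_slice_set_borel_measurable[OF ms sub]
            meas_slice_set_borel_measurable[OF ms0 sub]])
         (use 1 sub b lim in \<open>auto intro!: continuous_intros\<close>)
    then show ?thesis unfolding charsol_pos[OF 1] by (intro tendsto_add tendsto_const)
  next
    case 2
    have sub: "{\<tau>..Z} \<subseteq> {0..Z}" using r by auto
    have "(\<lambda>n. LINT t:{\<tau>..Z}|lborel. (exp (- \<kappa> \<nu> * (t - \<tau>) / \<bar>\<mu>\<bar>) * (1 / \<bar>\<mu>\<bar>)) * S n \<nu> t \<mu>)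
       \<longlonglongrightarrow> (LINT t:{\<tau>..Z}|lborel. (exp (- \<kappa> \<nu> * (t - \<tau>) / \<bar>\<mu>\<bar>) * (1 / \<bar>\<mu>\<bar>)) * S0 \<nu> t \<mu>)"
      by (rule tendsto_set_integral_kernel[where C=C, OF _ meas_slice_set_borel_measurable[OF ms sub]
            meas_slice_set_borel_measurable[OF ms0 sub]])
         (use 2 sub b lim in \<open>auto intro!: continuous_intros\<close>)
    then show ?thesis unfolding charsol_neg[OF 2] by (intro tendsto_add tendsto_const)
  qed (simp add: charsol_zero)
qed

section \<open>Monotonicity of the iteration\<close>

abbreviation stepI :: "(real \<Rightarrow> real \<Rightarrow> real \<Rightarrow> real) \<Rightarrow> (real \<Rightarrow> real) \<Rightarrow> real \<Rightarrow> real \<Rightarrow> real \<Rightarrow> real" where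
  "stepI I T \<equiv> charsol \<kappa> Qp Qm Z (src hb c kB \<kappa> ai ar I T)"

abbreviation stepT :: "(real \<Rightarrow> real \<Rightarrow> real \<Rightarrow> real) \<Rightarrow> real \<Rightarrow> real" where
  "stepT I \<equiv> TJ (\<lambda>\<nu> \<tau>. Jmom (I \<nu>) \<tau>)"

lemma admissible_stepI:
  assumes "admissible I E" "admissible_temp T"
  shows "admissible (stepI I T) (\<lambda>x. charsol \<kappa>0 Qp0 Qm0 Z (srcrep E T) (fst x) (fst (snd x)) (snd (snd x)))"
  unfolding admissible_def
proof (intro conjI allI impI)
  show "(\<lambda>x. charsol \<kappa>0 Qp0 Qm0 Z (srcrep E T) (fst x) (fst (snd x)) (snd (snd x)))
          \<in> borel_measurable (borel \<Otimes>\<^sub>M (borel \<Otimes>\<^sub>M borel))"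
    using assms by (intro borel_measurable_charsol_srcrep) (auto simp: admissible_def admissible_temp_def)
  fix \<nu> \<tau> \<mu> assume R: "in_dom \<nu> \<tau> \<mu>"
  then have r: "\<nu> > 0" "\<bar>\<mu>\<bar> \<le> 1" by (auto simp: in_dom_def)
  show "stepI I T \<nu> \<tau> \<mu> = charsol \<kappa>0 Qp0 Qm0 Z (srcrep E T) (fst (\<nu>, \<tau>, \<mu>)) (fst (snd (\<nu>, \<tau>, \<mu>))) (snd (snd (\<nu>, \<tau>, \<mu>)))"
    using charsol_src_eq_charsol_srcrep[OF assms(1) R] by simp
  have "0 \<le> stepI I T \<nu> \<tau> \<mu> \<and> stepI I T \<nu> \<tau> \<mu> \<le> Bmax \<nu>"
    by (rule charsol_bounds[OF R meas_slice_src[OF assms r(1)] src_bounds[OF assms r(1) _ r(2)]])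
  then show "0 \<le> stepI I T \<nu> \<tau> \<mu>" "stepI I T \<nu> \<tau> \<mu> \<le> Bmax \<nu>" by auto
qed

lemma stepI_mono:
  assumes "admissible I1 E1" "admissible I2 E2" "admissible_temp T1" "admissible_temp T2"
    and leI: "\<And>\<nu> \<tau> \<mu>. in_dom \<nu> \<tau> \<mu> \<Longrightarrow> I1 \<nu> \<tau> \<mu> \<le> I2 \<nu> \<tau> \<mu>"
    and leT: "\<And>t. t \<in> {0..Z} \<Longrightarrow> T1 t \<le> T2 t"
    and R: "in_dom \<nu> \<tau> \<mu>"
  shows "stepI I1 T1 \<nu> \<tau> \<mu> \<le> stepI I2 T2 \<nu> \<tau> \<mu>"
proof -
  have r: "\<nu> > 0" "\<bar>\<mu>\<bar> \<le> 1" using R by (auto simp: in_dom_def)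
  show ?thesis
  proof (rule charsol_mono[OF R meas_slice_src[OF assms(1,3) r(1)] meas_slice_src[OF assms(2,4) r(1)],
        where C="\<kappa> \<nu> * Bmax \<nu>"])
    fix t :: real assume t: "t \<in> {0..Z}"
    show "\<bar>src hb c kB \<kappa> ai ar I1 T1 \<nu> t \<mu>\<bar> \<le> \<kappa> \<nu> * Bmax \<nu>"
      using src_bounds[OF assms(1,3) r(1) t r(2)] by auto
    show "\<bar>src hb c kB \<kappa> ai ar I2 T2 \<nu> t \<mu>\<bar> \<le> \<kappa> \<nu> * Bmax \<nu>"
      using src_bounds[OF assms(2,4) r(1) t r(2)] by auto
    show "src hb c kB \<kappa> ai ar I1 T1 \<nu> t \<mu> \<le> src hb c kB \<kappa> ai ar I2 T2 \<nu> t \<mu>"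
      unfolding src_eq_srcrep[OF assms(1) r(1) t] src_eq_srcrep[OF assms(2) r(1) t]
      by (rule srcrep_mono[OF assms(1,2) r(1) t r(2)]) (use leI leT t in auto)
  qed
qed

lemma stepT_characterization:
  assumes "admissible I E" "\<tau> \<in> {0..Z}"
  shows "stepT I \<tau> \<in> {0..Tmax}" "ennreal (emission (stepT I \<tau>)) = absorption (\<lambda>\<nu> \<tau>. Jmom (I \<nu>) \<tau>) \<tau>"
  using TJ_characterization[where J="\<lambda>\<nu> \<tau>. Jmom (I \<nu>) \<tau>" and \<tau>=\<tau>] Jmom_bounds[OF assms(1) _ assms(2)] by auto

lemma stepT_mono:
  assumes "admissible I1 E1" "admissible I2 E2" "\<tau> \<in> {0..Z}"
    and le: "\<And>\<nu> \<tau> \<mu>. in_dom \<nu> \<tau> \<mu> \<Longrightarrow> I1 \<nu> \<tau> \<mu> \<le> I2 \<nu> \<tau> \<mu>"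
  shows "stepT I1 \<tau> \<le> stepT I2 \<tau>"
proof (rule TJ_mono)
  fix \<nu> :: real assume p: "\<nu> > 0"
  show "0 \<le> Jmom (I1 \<nu>) \<tau> \<and> Jmom (I1 \<nu>) \<tau> \<le> Bmax \<nu>" by (rule Jmom_bounds[OF assms(1) p assms(3)])
  show "0 \<le> Jmom (I2 \<nu>) \<tau> \<and> Jmom (I2 \<nu>) \<tau> \<le> Bmax \<nu>" by (rule Jmom_bounds[OF assms(2) p assms(3)])
  show "Jmom (I1 \<nu>) \<tau> \<le> Jmom (I2 \<nu>) \<tau>"
    unfolding Jmom_eq_Jrep[OF assms(1) p assms(3)] Jmom_eq_Jrep[OF assms(2) p assms(3)]
    by (rule Jrep_mono[OF assms(1,2) p assms(3) le])
qed

lemma absorption_Jmom: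
  assumes "admissible I E" "\<tau> \<in> {0..Z}"
  shows "absorption (\<lambda>\<nu> \<tau>. Jmom (I \<nu>) \<tau>) \<tau> = (\<integral>\<^sup>+\<nu>. ennreal (weight \<nu> * Jrep E \<nu> \<tau>) \<partial>lborel)"
  unfolding absorption_def
proof (intro nn_integral_cong)
  fix \<nu> :: real
  show "ennreal (weight \<nu> * Jmom (I \<nu>) \<tau>) = ennreal (weight \<nu> * Jrep E \<nu> \<tau>)"
    by (cases "\<nu> > 0") (auto simp: Jmom_eq_Jrep[OF assms(1) _ assms(2)] weight_def)
qed

text \<open>\<open>T[J]\<close> is the generalized inverse of the continuous increasing map \<open>emission\<close> applied to the
  absorption, so its sublevel sets are sublevel sets of a measurable function.\<close>

lemma stepT_le_iff:
  assumes "admissible I E" "\<tau> \<in> {0..Z}" "a \<ge> 0"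
  shows "stepT I \<tau> \<le> a \<longleftrightarrow> (\<integral>\<^sup>+\<nu>. ennreal (weight \<nu> * Jrep E \<nu> \<tau>) \<partial>lborel) \<le> ennreal (emission a)"
  using TJ_le_iff[where J="\<lambda>\<nu> \<tau>. Jmom (I \<nu>) \<tau>" and \<tau>=\<tau> and s=a] Jmom_bounds[OF assms(1) _ assms(2)]
    absorption_Jmom[OF assms(1,2)] assms(3) by auto

lemma admissible_temp_stepT:
  assumes "admissible I E"
  shows "admissible_temp (stepT I)"
  unfolding admissible_temp_def
proof (intro conjI ballI)
  fix t assume "t \<in> {0..Z}"
  then show "0 \<le> stepT I t" "stepT I t \<le> Tmax" using stepT_characterization(1)[OF assms] by auto
next
  have [measurable]: "E \<in> borel_measurable (borel \<Otimes>\<^sub>M (borel \<Otimes>\<^sub>M borel))"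
    using admissible_measurable[OF assms] .
  show "T_ext (stepT I) \<in> borel_measurable borel"
    unfolding borel_measurable_iff_le
  proof
    fix a :: real
    show "{x \<in> space borel. T_ext (stepT I) x \<le> a} \<in> sets borel"
    proof (cases "a \<ge> 0")
      case False
      then have "{x \<in> space borel. T_ext (stepT I) x \<le> a} = {}"
        using stepT_characterization(1)[OF assms] by (force simp: T_ext_def)
      then show ?thesis by simp
    next
      case True
      then have "{x \<in> space borel. T_ext (stepT I) x \<le> a}
          = {x. x \<notin> {0..Z}} \<union> {x. x \<in> {0..Z} \<and> (\<integral>\<^sup>+\<nu>. ennreal (weight \<nu> * Jrep E \<nu> x) \<partial>lborel) \<le> ennreal (emission a)}"
        using stepT_le_iff[OF assms] by (auto simp: T_ext_def)
      also have "\<dots> \<in> sets borel"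
        unfolding atLeastAtMost_iff by measurable
      finally show ?thesis .
    qed
  qed
qed

abbreviation It :: "nat \<Rightarrow> real \<Rightarrow> real \<Rightarrow> real \<Rightarrow> real" where
  "It n \<equiv> fst (rte_iter hb c kB \<kappa> ai ar Qp Qm Z n)"

abbreviation Tt :: "nat \<Rightarrow> real \<Rightarrow> real" where
  "Tt n \<equiv> snd (rte_iter hb c kB \<kappa> ai ar Qp Qm Z n)"

lemma It_Suc: "It (Suc n) = stepI (It n) (Tt n)"
  by (simp add: Let_def)

lemma Tt_Suc: "Tt (Suc n) = stepT (It (Suc n))"
  by (simp add: Let_def)

lemma admissible_iter: "\<exists>E. admissible (It n) E \<and> admissible_temp (Tt n)"
proof (induction n)
  case 0
  have "admissible (\<lambda>\<nu> \<tau> \<mu>. 0) (\<lambda>_. 0)" using Bmax_nonneg by (auto simp: admissible_def in_dom_def)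
  moreover have "admissible_temp (\<lambda>\<tau>. 0)" using Tmax_pos by (auto simp: admissible_temp_def T_ext_def[abs_def])
  ultimately show ?case by auto
next
  case (Suc n)
  then obtain E where "admissible (It n) E" "admissible_temp (Tt n)" by blast
  then obtain E' where E': "admissible (It (Suc n)) E'"
    unfolding It_Suc by (blast dest: admissible_stepI)
  moreover have "admissible_temp (Tt (Suc n))"
    unfolding Tt_Suc by (rule admissible_temp_stepT[OF E'])
  ultimately show ?case by blast
qed

definition Erep :: "nat \<Rightarrow> real \<times> real \<times> real \<Rightarrow> real" where
  "Erep = (SOME Es. \<forall>n. admissible (It n) (Es n))"

lemma admissible_Erep: "admissible (It n) (Erep n)"
proof -
  have "\<exists>Es. \<forall>n. admissible (It n) (Es n)" using admissible_iter by metis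
  from someI_ex[OF this] show ?thesis unfolding Erep_def by blast
qed

lemma borel_measurable_Erep[measurable]: "Erep n \<in> borel_measurable (borel \<Otimes>\<^sub>M (borel \<Otimes>\<^sub>M borel))"
  using admissible_measurable[OF admissible_Erep] .

lemma admissible_temp_Tt: "admissible_temp (Tt n)"
  using admissible_iter by blast

lemma iter_mono:
  "(\<forall>\<nu> \<tau> \<mu>. in_dom \<nu> \<tau> \<mu> \<longrightarrow> It n \<nu> \<tau> \<mu> \<le> It (Suc n) \<nu> \<tau> \<mu>) \<and> (\<forall>t\<in>{0..Z}. Tt n t \<le> Tt (Suc n) t)"
proof (induction n)
  case 0
  have "0 \<le> It 1 \<nu> \<tau> \<mu>" if "in_dom \<nu> \<tau> \<mu>" for \<nu> \<tau> \<mu>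
    using admissibleD[OF admissible_Erep that] by blast
  moreover have "0 \<le> Tt 1 t" if "t \<in> {0..Z}" for t
    using admissible_tempD[OF admissible_temp_Tt that] by blast
  ultimately show ?case by (simp only: rte_iter.simps(1) fst_conv snd_conv One_nat_def) blast
next
  case (Suc n)
  have I: "It (Suc n) \<nu> \<tau> \<mu> \<le> It (Suc (Suc n)) \<nu> \<tau> \<mu>" if "in_dom \<nu> \<tau> \<mu>" for \<nu> \<tau> \<mu>
    unfolding It_Suc[of n] It_Suc[of "Suc n"]
    by (rule stepI_mono[OF admissible_Erep[of n] admissible_Erep[of "Suc n", unfolded It_Suc]
          admissible_temp_Tt admissible_temp_Tt _ _ that])
       (use Suc in \<open>auto simp del: rte_iter.simps simp: It_Suc\<close>)
  have "Tt (Suc n) t \<le> Tt (Suc (Suc n)) t" if "t \<in> {0..Z}" for t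
    unfolding Tt_Suc[of n] Tt_Suc[of "Suc n"]
    by (rule stepT_mono[OF admissible_Erep admissible_Erep that]) (use I in auto)
  with I show ?case by blast
qed

section \<open>The limit is a mild solution in radiative equilibrium\<close>

definition Ilim :: "real \<Rightarrow> real \<Rightarrow> real \<Rightarrow> real" where "Ilim \<nu> \<tau> \<mu> = lim (\<lambda>n. It n \<nu> \<tau> \<mu>)"
definition Tlim :: "real \<Rightarrow> real" where "Tlim \<tau> = lim (\<lambda>n. Tt n \<tau>)"
definition Elim :: "real \<times> real \<times> real \<Rightarrow> real" where "Elim x = lim (\<lambda>n. Erep n x)"

lemma It_tendsto_Ilim:
  assumes "in_dom \<nu> \<tau> \<mu>" shows "(\<lambda>n. It n \<nu> \<tau> \<mu>) \<longlonglongrightarrow> Ilim \<nu> \<tau> \<mu>"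
proof -
  have "incseq (\<lambda>n. It n \<nu> \<tau> \<mu>)" by (rule incseq_SucI) (use iter_mono assms in blast)
  moreover have "bdd_above (range (\<lambda>n. It n \<nu> \<tau> \<mu>))"
    using admissibleD[OF admissible_Erep assms] by (intro bdd_aboveI[of _ "Bmax \<nu>"]) blast
  ultimately have "convergent (\<lambda>n. It n \<nu> \<tau> \<mu>)" using LIMSEQ_incseq_SUP convergent_def by blast
  then show ?thesis unfolding Ilim_def by (simp add: convergent_LIMSEQ_iff)
qed

lemma Tt_tendsto_Tlim:
  assumes "t \<in> {0..Z}" shows "(\<lambda>n. Tt n t) \<longlonglongrightarrow> Tlim t"
proof -
  have "incseq (\<lambda>n. Tt n t)" by (rule incseq_SucI) (use iter_mono assms in blast)
  moreover have "bdd_above (range (\<lambda>n. Tt n t))"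
    using admissible_tempD[OF admissible_temp_Tt assms] by (intro bdd_aboveI[of _ Tmax]) blast
  ultimately have "convergent (\<lambda>n. Tt n t)" using LIMSEQ_incseq_SUP convergent_def by blast
  then show ?thesis unfolding Tlim_def by (simp add: convergent_LIMSEQ_iff)
qed

lemma admissible_Ilim: "admissible Ilim Elim"
  unfolding admissible_def
proof (intro conjI allI impI)
  show "Elim \<in> borel_measurable (borel \<Otimes>\<^sub>M (borel \<Otimes>\<^sub>M borel))" unfolding Elim_def by measurable
  fix \<nu> \<tau> \<mu> assume R: "in_dom \<nu> \<tau> \<mu>"
  have "Erep n (\<nu>, \<tau>, \<mu>) = It n \<nu> \<tau> \<mu>" for n using admissibleD[OF admissible_Erep R] by metis
  then show "Ilim \<nu> \<tau> \<mu> = Elim (\<nu>, \<tau>, \<mu>)" by (simp add: Ilim_def Elim_def)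
  have b: "0 \<le> It n \<nu> \<tau> \<mu> \<and> It n \<nu> \<tau> \<mu> \<le> Bmax \<nu>" for n using admissibleD[OF admissible_Erep R] by metis
  show "0 \<le> Ilim \<nu> \<tau> \<mu>" using b by (intro LIMSEQ_le_const[OF It_tendsto_Ilim[OF R]]) auto
  show "Ilim \<nu> \<tau> \<mu> \<le> Bmax \<nu>" using b by (intro LIMSEQ_le_const2[OF It_tendsto_Ilim[OF R]]) auto
qed

lemma admissible_temp_Tlim: "admissible_temp Tlim"
  unfolding admissible_temp_def
proof (intro conjI ballI)
  have [measurable]: "T_ext (Tt n) \<in> borel_measurable borel" for n
    using admissible_temp_Tt by (simp add: admissible_temp_def)
  have "T_ext Tlim = (\<lambda>t. lim (\<lambda>n. T_ext (Tt n) t))"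
    by (auto simp: fun_eq_iff T_ext_def Tlim_def)
  also have "\<dots> \<in> borel_measurable borel" by measurable
  finally show "T_ext Tlim \<in> borel_measurable borel" .
  fix t assume t: "t \<in> {0..Z}"
  note b = admissible_tempD[OF admissible_temp_Tt t]
  show "0 \<le> Tlim t" using b by (intro LIMSEQ_le_const[OF Tt_tendsto_Tlim[OF t]]) auto
  show "Tlim t \<le> Tmax" using b by (intro LIMSEQ_le_const2[OF Tt_tendsto_Tlim[OF t]]) auto
qed

lemma tendsto_Ecut_Erep:
  assumes "\<nu> > 0" "t \<in> {0..Z}"
  shows "(\<lambda>n. Ecut (Erep n) (\<nu>, t, x)) \<longlonglongrightarrow> Ecut Elim (\<nu>, t, x)"
proof (cases "x \<in> {-1<..<1}")
  case True
  then have "in_dom \<nu> t x" using assms by (simp add: in_dom_def)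
  moreover have "Ecut (Erep n) (\<nu>, t, x) = It n \<nu> t x" for n
    using admissible_Ecut(1)[OF admissible_Erep assms True] by simp
  moreover have "Ecut Elim (\<nu>, t, x) = Ilim \<nu> t x"
    using admissible_Ecut(1)[OF admissible_Ilim assms True] by simp
  ultimately show ?thesis using It_tendsto_Ilim by simp
qed (auto simp: Ecut_def)

lemma tendsto_moments_Erep:
  assumes "\<nu> > 0" "t \<in> {0..Z}"
  shows "(\<lambda>n. Jrep (Erep n) \<nu> t) \<longlonglongrightarrow> Jrep Elim \<nu> t" and "(\<lambda>n. Krep (Erep n) \<nu> t) \<longlonglongrightarrow> Krep Elim \<nu> t"
proof -
  have "(\<lambda>n. LINT x:{-1..1}|lborel. K x * Ecut (Erep n) (\<nu>, t, x)) \<longlonglongrightarrow> (LINT x:{-1..1}|lborel. K x * Ecut Elim (\<nu>, t, x))"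
    if "continuous_on UNIV K" for K
    by (rule tendsto_set_integral_kernel[where C="Bmax \<nu>", OF that admissible_Ecut(3)[OF admissible_Erep assms]
          admissible_Ecut(3)[OF admissible_Ilim assms] Ecut_abs_le[OF admissible_Erep assms]
          tendsto_Ecut_Erep[OF assms]])
  note lim = this
  show "(\<lambda>n. Jrep (Erep n) \<nu> t) \<longlonglongrightarrow> Jrep Elim \<nu> t"
    using lim[OF continuous_on_const[of UNIV 1]] unfolding Jrep_def by (intro tendsto_mult_left) simp
  show "(\<lambda>n. Krep (Erep n) \<nu> t) \<longlonglongrightarrow> Krep Elim \<nu> t"
    using lim[of "\<lambda>x. x^2"] unfolding Krep_def by (intro tendsto_mult_left) (simp add: continuous_intros)
qed

lemma tendsto_src:
  assumes "\<nu> > 0" "t \<in> {0..Z}"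
  shows "(\<lambda>n. src hb c kB \<kappa> ai ar (It n) (Tt n) \<nu> t \<mu>) \<longlonglongrightarrow> src hb c kB \<kappa> ai ar Ilim Tlim \<nu> t \<mu>"
proof -
  have "(\<lambda>n. B \<nu> (Tt n t)) \<longlonglongrightarrow> B \<nu> (Tlim t)"
    by (rule tendsto_planck[OF phys assms(1) _ Tt_tendsto_Tlim[OF assms(2)]])
       (use admissible_tempD[OF admissible_temp_Tt assms(2)] in auto)
  then have "(\<lambda>n. B \<nu> (T_ext (Tt n) t)) \<longlonglongrightarrow> B \<nu> (T_ext Tlim t)"
    using assms(2) by (simp add: T_ext_def)
  then have "(\<lambda>n. srcrep (Erep n) (Tt n) \<nu> t \<mu>) \<longlonglongrightarrow> srcrep Elim Tlim \<nu> t \<mu>"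
    unfolding srcrep_def Srep_def by (intro tendsto_intros tendsto_moments_Erep[OF assms])
  then show ?thesis using src_eq_srcrep[OF admissible_Erep assms] src_eq_srcrep[OF admissible_Ilim assms] by simp
qed

lemma mild_solution_lim: "mild_solution \<kappa> Qp Qm Z (src hb c kB \<kappa> ai ar Ilim Tlim) Ilim"
  unfolding mild_solution_def
proof (intro allI impI)
  fix \<nu> \<tau> \<mu> :: real assume "0 < \<nu> \<and> \<tau> \<in> {0..Z} \<and> \<mu> \<in> {- 1<..<1} \<and> \<mu> \<noteq> 0"
  then have R: "in_dom \<nu> \<tau> \<mu>" and r: "\<nu> > 0" "\<bar>\<mu>\<bar> \<le> 1" by (auto simp: in_dom_def)
  have "(\<lambda>n. stepI (It n) (Tt n) \<nu> \<tau> \<mu>) \<longlonglongrightarrow> stepI Ilim Tlim \<nu> \<tau> \<mu>"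
  proof (rule tendsto_charsol[OF R, where C="\<kappa> \<nu> * Bmax \<nu>"])
    show "meas_slice (src hb c kB \<kappa> ai ar (It n) (Tt n)) \<nu> \<mu>" for n
      by (rule meas_slice_src[OF admissible_Erep admissible_temp_Tt r(1)])
    show "meas_slice (src hb c kB \<kappa> ai ar Ilim Tlim) \<nu> \<mu>"
      by (rule meas_slice_src[OF admissible_Ilim admissible_temp_Tlim r(1)])
    show "\<bar>src hb c kB \<kappa> ai ar (It n) (Tt n) \<nu> t \<mu>\<bar> \<le> \<kappa> \<nu> * Bmax \<nu>" if "t \<in> {0..Z}" for n t
      using src_bounds[OF admissible_Erep admissible_temp_Tt r(1) that r(2)] by auto
  qed (rule tendsto_src[OF r(1)])
  moreover have "(\<lambda>n. stepI (It n) (Tt n) \<nu> \<tau> \<mu>) \<longlonglongrightarrow> Ilim \<nu> \<tau> \<mu>"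
    using LIMSEQ_Suc[OF It_tendsto_Ilim[OF R]] by (simp add: Let_def)
  ultimately show "Ilim \<nu> \<tau> \<mu> = charsol \<kappa> Qp Qm Z (src hb c kB \<kappa> ai ar Ilim Tlim) \<nu> \<tau> \<mu>"
    using LIMSEQ_unique by blast
qed

lemma weight_Jrep_bounds:
  assumes "admissible I E" "\<tau> \<in> {0..Z}"
  shows "0 \<le> weight \<nu> * Jrep E \<nu> \<tau>" "weight \<nu> * Jrep E \<nu> \<tau> \<le> \<kappa>M * (Bmax \<nu> * indicator {0<..} \<nu>)"
proof -
  show "0 \<le> weight \<nu> * Jrep E \<nu> \<tau>"
  proof (cases "\<nu> > 0")
    case True
    then show ?thesis using Jrep_bounds[OF assms(1) True assms(2)] weight_nonneg by simp
  qed (simp add: weight_def)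
  show "weight \<nu> * Jrep E \<nu> \<tau> \<le> \<kappa>M * (Bmax \<nu> * indicator {0<..} \<nu>)"
  proof (cases "\<nu> > 0")
    case True
    have "weight \<nu> * Jrep E \<nu> \<tau> \<le> \<kappa>M * Bmax \<nu>"
      using Jrep_bounds[OF assms(1) True assms(2)] weight_nonneg weight_le \<kappa>M_nonneg by (intro mult_mono) auto
    then show ?thesis using True by simp
  qed (simp add: weight_def)
qed

lemma integrable_\<kappa>M_Bmax: "integrable lborel (\<lambda>\<nu>. \<kappa>M * (Bmax \<nu> * indicator {0<..} \<nu>))"
  using integrable_B[of Tmax] Tmax_pos by (intro integrable_mult_right) (simp add: Bmax_def)

lemma integrable_weight_Jrep:
  assumes "admissible I E" "\<tau> \<in> {0..Z}"
  shows "integrable lborel (\<lambda>\<nu>. weight \<nu> * Jrep E \<nu> \<tau>)"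
  using integrable_\<kappa>M_Bmax
proof (rule Bochner_Integration.integrable_bound)
  have [measurable]: "E \<in> borel_measurable (borel \<Otimes>\<^sub>M (borel \<Otimes>\<^sub>M borel))"
    using admissible_measurable[OF assms(1)] .
  show "(\<lambda>\<nu>. weight \<nu> * Jrep E \<nu> \<tau>) \<in> borel_measurable lborel" by measurable
  show "AE x in lborel. norm (weight x * Jrep E x \<tau>) \<le> norm (\<kappa>M * (Bmax x * indicator {0<..} x))"
    using weight_Jrep_bounds[OF assms] by (intro AE_I2) (smt (verit) real_norm_def)
qed

lemma nn_integral_weight_Jrep:
  assumes "admissible I E" "\<tau> \<in> {0..Z}"
  shows "(\<integral>\<^sup>+\<nu>. ennreal (weight \<nu> * Jrep E \<nu> \<tau>) \<partial>lborel) = ennreal (LINT \<nu>|lborel. weight \<nu> * Jrep E \<nu> \<tau>)"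
  by (intro nn_integral_eq_integral integrable_weight_Jrep[OF assms] AE_I2 weight_Jrep_bounds(1)[OF assms])

lemma emission_Tt_Suc:
  assumes "\<tau> \<in> {0..Z}"
  shows "emission (Tt (Suc n) \<tau>) = (LINT \<nu>|lborel. weight \<nu> * Jrep (Erep (Suc n)) \<nu> \<tau>)"
proof -
  have "ennreal (emission (Tt (Suc n) \<tau>)) = ennreal (LINT \<nu>|lborel. weight \<nu> * Jrep (Erep (Suc n)) \<nu> \<tau>)"
    unfolding Tt_Suc stepT_characterization(2)[OF admissible_Erep assms]
      absorption_Jmom[OF admissible_Erep assms] nn_integral_weight_Jrep[OF admissible_Erep assms] ..
  moreover have "0 \<le> (LINT \<nu>|lborel. weight \<nu> * Jrep (Erep (Suc n)) \<nu> \<tau>)"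
    by (intro integral_nonneg_AE AE_I2 weight_Jrep_bounds(1)[OF admissible_Erep assms])
  ultimately show ?thesis using emission_nonneg by simp
qed

lemma tendsto_LINT_weight_Jrep:
  assumes t: "\<tau> \<in> {0..Z}"
  shows "(\<lambda>n. LINT \<nu>|lborel. weight \<nu> * Jrep (Erep n) \<nu> \<tau>) \<longlonglongrightarrow> (LINT \<nu>|lborel. weight \<nu> * Jrep Elim \<nu> \<tau>)"
proof (rule integral_dominated_convergence[OF _ _ integrable_\<kappa>M_Bmax])
  have [measurable]: "Elim \<in> borel_measurable (borel \<Otimes>\<^sub>M (borel \<Otimes>\<^sub>M borel))"
    using admissible_measurable[OF admissible_Ilim] .
  show "(\<lambda>\<nu>. weight \<nu> * Jrep Elim \<nu> \<tau>) \<in> borel_measurable lborel" by measurable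
  show "(\<lambda>\<nu>. weight \<nu> * Jrep (Erep n) \<nu> \<tau>) \<in> borel_measurable lborel" for n by measurable
  show "AE x in lborel. (\<lambda>n. weight x * Jrep (Erep n) x \<tau>) \<longlonglongrightarrow> weight x * Jrep Elim x \<tau>"
  proof (rule AE_I2)
    fix x :: real
    show "(\<lambda>n. weight x * Jrep (Erep n) x \<tau>) \<longlonglongrightarrow> weight x * Jrep Elim x \<tau>"
      by (cases "x > 0") (auto simp: weight_def intro!: tendsto_mult_left tendsto_moments_Erep(1) t)
  qed
  show "AE x in lborel. norm (weight x * Jrep (Erep n) x \<tau>) \<le> \<kappa>M * (Bmax x * indicator {0<..} x)" for n
    using weight_Jrep_bounds[OF admissible_Erep t] by (intro AE_I2) simp
qed

lemma radiative_equilibrium_lim: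
  assumes t: "\<tau> \<in> {0..Z}"
  shows "(\<integral>\<^sup>+ \<nu>. ennreal (\<kappa> \<nu> * (1 - (ai \<nu> + ar \<nu>)) * planck hb c kB \<nu> (Tlim \<tau>)) * indicator {0<..} \<nu> \<partial>lborel)
       = (\<integral>\<^sup>+ \<nu>. ennreal (\<kappa> \<nu> * (1 - (ai \<nu> + ar \<nu>)) * Jmom (Ilim \<nu>) \<tau>) * indicator {0<..} \<nu> \<partial>lborel)"
proof -
  have T0: "0 \<le> Tlim \<tau>" using admissible_tempD[OF admissible_temp_Tlim t] by simp
  have "(\<lambda>n. emission (Tt n \<tau>)) \<longlonglongrightarrow> emission (Tlim \<tau>)"
    by (rule continuous_on_tendsto_compose[OF continuous_on_emission Tt_tendsto_Tlim[OF t]])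
       (use T0 admissible_tempD[OF admissible_temp_Tt t] in auto)
  from LIMSEQ_Suc[OF this] have "(\<lambda>n. LINT \<nu>|lborel. weight \<nu> * Jrep (Erep (Suc n)) \<nu> \<tau>) \<longlonglongrightarrow> emission (Tlim \<tau>)"
    unfolding emission_Tt_Suc[OF t] .
  with LIMSEQ_Suc[OF tendsto_LINT_weight_Jrep[OF t]]
  have lim: "emission (Tlim \<tau>) = (LINT \<nu>|lborel. weight \<nu> * Jrep Elim \<nu> \<tau>)"
    using LIMSEQ_unique by blast
  have "(\<integral>\<^sup>+ \<nu>. ennreal (weight \<nu> * B \<nu> (Tlim \<tau>)) \<partial>lborel) = absorption (\<lambda>\<nu> \<tau>. Jmom (Ilim \<nu>) \<tau>) \<tau>"
    unfolding nn_integral_weight_B[OF T0] lim absorption_Jmom[OF admissible_Ilim t]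
      nn_integral_weight_Jrep[OF admissible_Ilim t] ..
  then show ?thesis unfolding nn_integral_weight absorption_def .
qed

end

theorem theorem2:
  fixes hb c kB Z \<kappa>M TM Qc :: real
    and \<kappa> ai ar :: "real \<Rightarrow> real"
    and Qp Qm :: "real \<Rightarrow> real \<Rightarrow> real"
  assumes phys: "hb > 0" "c > 0" "kB > 0"
    and Z: "Z > 0"
    and meas_\<kappa>: "\<kappa> \<in> borel_measurable (restrict_space borel {0<..})"
    and meas_ai: "ai \<in> borel_measurable (restrict_space borel {0<..})"
    and meas_ar: "ar \<in> borel_measurable (restrict_space borel {0<..})"
    and \<kappa>_bd: "\<And>\<nu>. \<nu> > 0 \<Longrightarrow> 0 < \<kappa> \<nu> \<and> \<kappa> \<nu> \<le> \<kappa>M"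
    and a_bd: "\<And>\<nu>. \<nu> > 0 \<Longrightarrow> ai \<nu> \<ge> 0 \<and> ar \<nu> \<ge> 0 \<and> ai \<nu> + ar \<nu> < 1"
    and meas_Qp: "(\<lambda>(\<mu>, \<nu>). Qp \<nu> \<mu>) \<in> borel_measurable (restrict_space borel ({0<..<1} \<times> {0<..}))"
    and meas_Qm: "(\<lambda>(\<mu>, \<nu>). Qm \<nu> \<mu>) \<in> borel_measurable (restrict_space borel ({0<..<1} \<times> {0<..}))"
    and TM: "TM > 0" and Qc: "Qc > 0"
    and Q_bd: "\<And>\<mu> \<nu>. \<mu> \<in> {0<..<1} \<Longrightarrow> \<nu> > 0 \<Longrightarrow>
        0 \<le> Qp \<nu> \<mu> \<and> Qp \<nu> \<mu> \<le> Qc * planck hb c kB \<nu> TM \<and>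
        0 \<le> Qm \<nu> \<mu> \<and> Qm \<nu> \<mu> \<le> Qc * planck hb c kB \<nu> TM"
  shows
    "(\<forall>n \<nu> \<tau> \<mu>. \<nu> > 0 \<and> \<tau> \<in> {0..Z} \<and> \<mu> \<in> {-1<..<1} \<and> \<mu> \<noteq> 0 \<longrightarrow>
        fst (rte_iter hb c kB \<kappa> ai ar Qp Qm Z n) \<nu> \<tau> \<mu>
          \<le> fst (rte_iter hb c kB \<kappa> ai ar Qp Qm Z (Suc n)) \<nu> \<tau> \<mu>)
   \<and> (\<forall>n \<tau>. \<tau> \<in> {0..Z} \<longrightarrow>
        snd (rte_iter hb c kB \<kappa> ai ar Qp Qm Z n) \<tau>
          \<le> snd (rte_iter hb c kB \<kappa> ai ar Qp Qm Z (Suc n)) \<tau>)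
   \<and> (\<exists>I T.
        (\<forall>\<nu> \<tau> \<mu>. \<nu> > 0 \<and> \<tau> \<in> {0..Z} \<and> \<mu> \<in> {-1<..<1} \<and> \<mu> \<noteq> 0 \<longrightarrow>
           (\<lambda>n. fst (rte_iter hb c kB \<kappa> ai ar Qp Qm Z n) \<nu> \<tau> \<mu>) \<longlonglongrightarrow> I \<nu> \<tau> \<mu>)
      \<and> (\<forall>\<tau>. \<tau> \<in> {0..Z} \<longrightarrow>
           (\<lambda>n. snd (rte_iter hb c kB \<kappa> ai ar Qp Qm Z n) \<tau>) \<longlonglongrightarrow> T \<tau>)
      \<and> mild_solution \<kappa> Qp Qm Z (src hb c kB \<kappa> ai ar I T) I
      \<and> (\<forall>\<tau>. \<tau> \<in> {0..Z} \<longrightarrow> T \<tau> \<ge> 0 \<and>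
           (\<integral>\<^sup>+ \<nu>. ennreal (\<kappa> \<nu> * (1 - (ai \<nu> + ar \<nu>)) * planck hb c kB \<nu> (T \<tau>)) * indicator {0<..} \<nu> \<partial>lborel)
         = (\<integral>\<^sup>+ \<nu>. ennreal (\<kappa> \<nu> * (1 - (ai \<nu> + ar \<nu>)) * Jmom (I \<nu>) \<tau>) * indicator {0<..} \<nu> \<partial>lborel)))"
proof -
  interpret rte hb c kB Z \<kappa>M TM Qc \<kappa> ai ar Qp Qm
    by unfold_locales (use assms in auto)
  have dom: "\<nu> > 0 \<and> \<tau> \<in> {0..Z} \<and> \<mu> \<in> {-1<..<1} \<and> \<mu> \<noteq> 0 \<Longrightarrow> in_dom \<nu> \<tau> \<mu>" for \<nu> \<tau> \<mu>
    by (simp add: in_dom_def)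
  show ?thesis
  proof (intro conjI allI impI exI[of _ Ilim] exI[of _ Tlim])
    show "It n \<nu> \<tau> \<mu> \<le> It (Suc n) \<nu> \<tau> \<mu>" "(\<lambda>n. It n \<nu> \<tau> \<mu>) \<longlonglongrightarrow> Ilim \<nu> \<tau> \<mu>"
      if "\<nu> > 0 \<and> \<tau> \<in> {0..Z} \<and> \<mu> \<in> {-1<..<1} \<and> \<mu> \<noteq> 0" for n \<nu> \<tau> \<mu>
      using iter_mono It_tendsto_Ilim dom[OF that] by (blast, blast)
    show "Tt n \<tau> \<le> Tt (Suc n) \<tau>" "(\<lambda>n. Tt n \<tau>) \<longlonglongrightarrow> Tlim \<tau>" if "\<tau> \<in> {0..Z}" for n \<tau>
      using iter_mono Tt_tendsto_Tlim that by (blast, blast)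
    show "Tlim \<tau> \<ge> 0" if "\<tau> \<in> {0..Z}" for \<tau> using admissible_tempD[OF admissible_temp_Tlim that] by simp
  qed (fact mild_solution_lim, fact radiative_equilibrium_lim)
qed

end
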